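(* Let $\Delta=0$ be a passive orthonomic system as described in the context. Define the intrinsic multi-differential operators $\mathfrak{D}_K:\mathcal{B}\to\mathcal{B}$ by $\mathfrak{D}_KP=\widetilde{D_KP}$ for $P\in\mathcal{B}$, $K\in\mathbb{N}^p$. Then for all $K,L\in\mathbb{N}^p$, $\mathfrak{D}_K\mathfrak{D}_L=\mathfrak{D}_{K+L}$.
   Context: Jet space: coordinates $x_1,\dots,x_p$, $u^1,\dots,u^q$ and derivatives $u^j_K$, $K\in\mathbb{N}^p$ a multi-index. $\mathcal{A}$ is the ring of smooth functions of finitely many of these coordinates. Total derivatives $D_i=\partial/\partial x_i+\sum_{j,K}u^j_{K+e_i}\,\partial/\partial u^j_K$ ($e_i$ the $i$-th unit multi-index), $D_K=D_1^{K_1}\cdots D_p^{K_p}$. Choose $n$ pairs $(i^\alpha,J^\alpha)\in\{1,\dots,q\}\times\mathbb{N}^p$, $J^\alpha\neq0$. $u^j_K$ is principal if $(j,K)=(i^\alpha,J^\alpha+L)$ for some $\alpha,L$, otherwise parametric; $\mathcal{B}\subset\mathcal{A}$ consists of functions of the $x_i$ and parametric derivatives only. Fix a ranking $\le$: a total order on $\{1,\dots,q\}\times\mathbb{N}^p$ with $(j,K)\le(j,K+L)$ and $(i,J)\le(j,K)\iff(i,J+L)\le(j,K+L)$. The system is $u^{i^\alpha}_{J^\alpha}=P^\alpha$, $P^\alpha\in\mathcal{B}$, written $\Delta=0$ with $\Delta^\alpha=u^{i^\alpha}_{J^\alpha}-P^\alpha$; it is passive orthonomic if (i) $P^\alpha$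 depends only on $u^j_K$ with $(j,K)<(i^\alpha,J^\alpha)$, and (ii) $(i^\alpha,J^\alpha+K)=(i^\beta,J^\beta+L)$ implies $D_KP^\alpha=D_LP^\beta$ (modulo the system). For such systems every $Q\in\mathcal{A}$ has a unique reduced form $\widetilde{Q}\in\mathcal{B}$ with $\widetilde{Q}\equiv Q$ modulo the differential ideal generated by the $\Delta^\alpha$ (obtained by repeatedly substituting $u^{i^\alpha}_{J^\alpha+L}\mapsto D_LP^\alpha$ for the highest principal derivative). *)

theory Defs
  imports "HOL-Analysis.Analysis"
begin

text \<open>Jet space. Independent variables x_0,...,x_(p-1), dependent variables
u^0,...,u^(q-1) (0-based indexing). Multi-indices in N^p are functions
nat => nat vanishing at all k >= p.\<close>

type_synonym mindex = "nat \<Rightarrow> nat"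

definition is_mindex :: "nat \<Rightarrow> mindex \<Rightarrow> bool" where
  "is_mindex p K \<longleftrightarrow> (\<forall>k\<ge>p. K k = 0)"

definition madd :: "mindex \<Rightarrow> mindex \<Rightarrow> mindex" where
  "madd K L = (\<lambda>k. K k + L k)"

definition unit_mi :: "nat \<Rightarrow> mindex" where
  "unit_mi i = (\<lambda>k. if k = i then 1 else 0)"

text \<open>Jet coordinates: X k is x_k, U j K is u^j_K.\<close>
datatype coord = X nat | U nat mindex

type_synonym jet = "coord \<Rightarrow> real"
type_synonym jfun = "jet \<Rightarrow> real"

fun valid_coord :: "nat \<Rightarrow> nat \<Rightarrow> coord \<Rightarrow> bool" where
  "valid_coord p q (X k) \<longleftrightarrow> k < p"
| "valid_coord p q (U j K) \<longleftrightarrow> j < q \<and> is_mindex p K"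

definition deps :: "jfun \<Rightarrow> coord set" where
  "deps F = {c. \<exists>z t. F (z(c := t)) \<noteq> F z}"

definition pdiff :: "coord \<Rightarrow> jfun \<Rightarrow> jfun" where
  "pdiff c F = (\<lambda>z. deriv (\<lambda>t. F (z(c := t))) (z c))"

text \<open>Continuity is w.r.t. the product topology, which for functions of
finitely many coordinates is ordinary continuity in those coordinates.\<close>
coinductive smooth_jf :: "jfun \<Rightarrow> bool" where
  "continuous_on UNIV F \<Longrightarrow>
   (\<forall>c z. (\<lambda>t. F (z(c := t))) differentiable (at (z c))) \<Longrightarrow>
   (\<forall>c. smooth_jf (pdiff c F)) \<Longrightarrow> smooth_jf F"

definition fA :: "nat \<Rightarrow> nat \<Rightarrow> jfun set" where
  "fA p q = {F. finite (deps F) \<and> (\<forall>c\<in>deps F. valid_coord p q c) \<and> smooth_jf F}"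

fun is_U :: "coord \<Rightarrow> bool" where
  "is_U (U j K) = True"
| "is_U (X k) = False"

fun shift :: "nat \<Rightarrow> coord \<Rightarrow> coord" where
  "shift i (U j K) = U j (madd K (unit_mi i))"
| "shift i (X k) = X k"

text \<open>Total derivative D_i (the sum over all u^j_K reduces to the finitely
many coordinates F depends on).\<close>
definition tdiff :: "nat \<Rightarrow> jfun \<Rightarrow> jfun" where
  "tdiff i F = (\<lambda>z. pdiff (X i) F z + (\<Sum>c\<in>{c\<in>deps F. is_U c}. z (shift i c) * pdiff c F z))"

definition tdiffK :: "nat \<Rightarrow> mindex \<Rightarrow> jfun \<Rightarrow> jfun" where
  "tdiffK p K F = fold (\<lambda>i G. (tdiff i ^^ K i) G) (rev [0..<p]) F"

text \<open>System data: n pairs (ii a, JJ a), right-hand sides PP a, a < n.\<close>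
definition principal :: "nat \<Rightarrow> (nat \<Rightarrow> nat) \<Rightarrow> (nat \<Rightarrow> mindex) \<Rightarrow> nat \<Rightarrow> mindex \<Rightarrow> bool" where
  "principal n ii JJ j K \<longleftrightarrow> (\<exists>a<n. \<exists>L. j = ii a \<and> K = madd (JJ a) L)"

definition fB :: "nat \<Rightarrow> nat \<Rightarrow> nat \<Rightarrow> (nat \<Rightarrow> nat) \<Rightarrow> (nat \<Rightarrow> mindex) \<Rightarrow> jfun set" where
  "fB p q n ii JJ = {F \<in> fA p q. \<forall>c\<in>deps F.
      (case c of X k \<Rightarrow> True | U j K \<Rightarrow> \<not> principal n ii JJ j K)}"

definition is_ranking :: "nat \<Rightarrow> nat \<Rightarrow> ((nat \<times> mindex) \<times> (nat \<times> mindex)) set \<Rightarrow> bool" where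
  "is_ranking p q R \<longleftrightarrow>
     linear_order_on {(j, K). j < q \<and> is_mindex p K} R \<and>
     (\<forall>j K L. j < q \<and> is_mindex p K \<and> is_mindex p L \<longrightarrow> ((j, K), (j, madd K L)) \<in> R) \<and>
     (\<forall>i J j K L. i < q \<and> j < q \<and> is_mindex p J \<and> is_mindex p K \<and> is_mindex p L \<longrightarrow>
        (((i, J), (j, K)) \<in> R \<longleftrightarrow> ((i, madd J L), (j, madd K L)) \<in> R))"

definition Delta :: "(nat \<Rightarrow> nat) \<Rightarrow> (nat \<Rightarrow> mindex) \<Rightarrow> (nat \<Rightarrow> jfun) \<Rightarrow> nat \<Rightarrow> jfun" where
  "Delta ii JJ PP a = (\<lambda>z. z (U (ii a) (JJ a)) - PP a z)"

inductive_set diff_ideal :: "nat \<Rightarrow> nat \<Rightarrow> nat \<Rightarrow> (nat \<Rightarrow> nat) \<Rightarrow> (nat \<Rightarrow> mindex)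
    \<Rightarrow> (nat \<Rightarrow> jfun) \<Rightarrow> jfun set"
  for p q n ii JJ PP where
  zero: "(\<lambda>z. 0) \<in> diff_ideal p q n ii JJ PP"
| add: "G \<in> diff_ideal p q n ii JJ PP \<Longrightarrow> c \<in> fA p q \<Longrightarrow> a < n \<Longrightarrow> is_mindex p L \<Longrightarrow>
        (\<lambda>z. G z + c z * tdiffK p L (Delta ii JJ PP a) z) \<in> diff_ideal p q n ii JJ PP"

definition subst_coord :: "coord \<Rightarrow> jfun \<Rightarrow> jfun \<Rightarrow> jfun" where
  "subst_coord c G F = (\<lambda>z. F (z(c := G z)))"

definition red_step :: "nat \<Rightarrow> nat \<Rightarrow> (nat \<Rightarrow> nat) \<Rightarrow> (nat \<Rightarrow> mindex)
    \<Rightarrow> ((nat \<times> mindex) \<times> (nat \<times> mindex)) set \<Rightarrow> (nat \<Rightarrow> jfun) \<Rightarrow> jfun \<Rightarrow> jfun \<Rightarrow> bool" where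
  "red_step p n ii JJ R PP F F' \<longleftrightarrow>
     (\<exists>j K a L. U j K \<in> deps F \<and> principal n ii JJ j K \<and>
        (\<forall>j' K'. U j' K' \<in> deps F \<and> principal n ii JJ j' K' \<longrightarrow> ((j', K'), (j, K)) \<in> R) \<and>
        a < n \<and> j = ii a \<and> K = madd (JJ a) L \<and>
        F' = subst_coord (U j K) (tdiffK p L (PP a)) F)"

definition reduces_to :: "nat \<Rightarrow> nat \<Rightarrow> nat \<Rightarrow> (nat \<Rightarrow> nat) \<Rightarrow> (nat \<Rightarrow> mindex)
    \<Rightarrow> ((nat \<times> mindex) \<times> (nat \<times> mindex)) set \<Rightarrow> (nat \<Rightarrow> jfun) \<Rightarrow> jfun \<Rightarrow> jfun \<Rightarrow> bool" where
  "reduces_to p q n ii JJ R PP F G \<longleftrightarrow>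
     (red_step p n ii JJ R PP)\<^sup>*\<^sup>* F G \<and> G \<in> fB p q n ii JJ"

definition passive_orthonomic :: "nat \<Rightarrow> nat \<Rightarrow> nat \<Rightarrow> (nat \<Rightarrow> nat) \<Rightarrow> (nat \<Rightarrow> mindex)
    \<Rightarrow> ((nat \<times> mindex) \<times> (nat \<times> mindex)) set \<Rightarrow> (nat \<Rightarrow> jfun) \<Rightarrow> bool" where
  "passive_orthonomic p q n ii JJ R PP \<longleftrightarrow>
     is_ranking p q R \<and>
     (\<forall>a<n. ii a < q \<and> is_mindex p (JJ a) \<and> JJ a \<noteq> (\<lambda>k. 0)) \<and>
     (\<forall>a<n. PP a \<in> fB p q n ii JJ) \<and>
     \<comment> \<open>(i) orthonomic\<close>
     (\<forall>a<n. \<forall>c\<in>deps (PP a). (case c of X k \<Rightarrow> True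
         | U j K \<Rightarrow> ((j, K), (ii a, JJ a)) \<in> R \<and> (j, K) \<noteq> (ii a, JJ a))) \<and>
     \<comment> \<open>(ii) passive: the integrability conditions reduce to identities\<close>
     (\<forall>a b K L. a < n \<and> b < n \<and> is_mindex p K \<and> is_mindex p L \<and>
        ii a = ii b \<and> madd (JJ a) K = madd (JJ b) L \<longrightarrow>
        (\<forall>G1 G2. reduces_to p q n ii JJ R PP (tdiffK p K (PP a)) G1 \<longrightarrow>
                 reduces_to p q n ii JJ R PP (tdiffK p L (PP b)) G2 \<longrightarrow> G1 = G2))"

definition reduced_form :: "nat \<Rightarrow> nat \<Rightarrow> nat \<Rightarrow> (nat \<Rightarrow> nat) \<Rightarrow> (nat \<Rightarrow> mindex)
    \<Rightarrow> (nat \<Rightarrow> jfun) \<Rightarrow> jfun \<Rightarrow> jfun" where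
  "reduced_form p q n ii JJ PP Q =
     (THE R. R \<in> fB p q n ii JJ \<and> (\<lambda>z. Q z - R z) \<in> diff_ideal p q n ii JJ PP)"

definition frakD :: "nat \<Rightarrow> nat \<Rightarrow> nat \<Rightarrow> (nat \<Rightarrow> nat) \<Rightarrow> (nat \<Rightarrow> mindex)
    \<Rightarrow> (nat \<Rightarrow> jfun) \<Rightarrow> mindex \<Rightarrow> jfun \<Rightarrow> jfun" where
  "frakD p q n ii JJ PP K P = reduced_form p q n ii JJ PP (tdiffK p K P)"

end

theory Submission
  imports Defs
begin

text \<open>
  Existence: substituting the highest principal
  derivative lowers the multiset of principal derivatives in the multiset extension
  of the ranking, which is well-founded by Dickson's lemma.  Uniqueness: for
  arbitrary values \<open>z0\<close>, recursion along the ranking gives a jet that agrees with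
  \<open>z0\<close> on the \<open>x_i\<close> and the parametric derivatives and has
  \<open>u^(i^a)_(J^a+L) = D_L P^a\<close> on the principal ones; by passivity this does not
  depend on the chosen \<open>(a, L)\<close>.  All of \<open>I\<close> vanishes on this jet, while elements
  of \<open>B\<close> take the same value there as at \<open>z0\<close>; so two reduced forms of \<open>Q\<close> agree
  at every \<open>z0\<close>.

  Total derivatives commute (Schwarz), so \<open>D_K D_L = D_(K+L)\<close>, and \<open>D_K\<close> maps \<open>I\<close>
  into itself.  Hence \<open>\<frakD>_K \<frakD>_L P \<equiv> D_K D_L P = D_(K+L) P\<close> modulo \<open>I\<close>, and
  uniqueness gives the claim.
\<close>

section \<open>Coordinate dependence and smoothness\<close>

lemma notin_deps_upd: "c \<notin> deps F \<Longrightarrow> F (z(c:=t)) = F z"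
  unfolding deps_def by auto

lemma deps_subsetI: "(\<And>z c t. c \<notin> S \<Longrightarrow> F (z(c:=t)) = F z) \<Longrightarrow> deps F \<subseteq> S"
  unfolding deps_def by auto

lemma pdiff_notin_deps: "c \<notin> deps F \<Longrightarrow> pdiff c F z = 0"
proof -
  assume "c \<notin> deps F"
  then have "(\<lambda>t. F (z(c:=t))) = (\<lambda>t. F z)" using notin_deps_upd by (auto intro!: ext)
  then show ?thesis unfolding pdiff_def by simp
qed

lemma deps_pdiff: "deps (pdiff c F) \<subseteq> deps F"
proof (rule deps_subsetI)
  fix z e t assume e: "e \<notin> deps F"
  show "pdiff c F (z(e:=t)) = pdiff c F z"
  proof (cases "e = c")
    case True then show ?thesis using e pdiff_notin_deps by simp
  next
    case False
    have "(\<lambda>s. F (z(e:=t, c:=s))) = (\<lambda>s. F (z(c:=s)))"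
      using False notin_deps_upd[OF e] by (auto intro!: ext simp: fun_upd_twist)
    then show ?thesis using False unfolding pdiff_def by simp
  qed
qed

lemma smoothD:
  assumes "smooth_jf F"
  shows "continuous_on UNIV F" "\<And>c z. (\<lambda>t. F (z(c := t))) differentiable (at (z c))"
    "\<And>c. smooth_jf (pdiff c F)"
  using assms by (auto elim: smooth_jf.cases)

lemma smooth_has_pdiff:
  assumes "smooth_jf F"
  shows "((\<lambda>t. F (z(c:=t))) has_real_derivative pdiff c F (z(c:=t))) (at t)"
proof -
  define w where "w = z(c:=t)"
  have "(\<lambda>s. F (w(c := s))) differentiable (at (w c))"
    using smoothD(2)[OF assms] by blast
  moreover have "w c = t" "\<And>s. w(c:=s) = z(c:=s)" by (auto simp: w_def)
  ultimately have "(\<lambda>s. F (z(c := s))) differentiable (at t)" by simp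
  then have "((\<lambda>s. F (z(c := s))) has_real_derivative deriv (\<lambda>s. F (z(c := s))) t) (at t)"
    using DERIV_deriv_iff_real_differentiable by blast
  moreover have "pdiff c F w = deriv (\<lambda>s. F (z(c := s))) t"
    unfolding pdiff_def using \<open>w c = t\<close> \<open>\<And>s. w(c:=s) = z(c:=s)\<close> by simp
  ultimately show ?thesis unfolding w_def by simp
qed

definition has_partials :: "jfun \<Rightarrow> bool" where
  "has_partials F \<longleftrightarrow> (\<forall>c z t. ((\<lambda>t. F (z(c:=t))) has_real_derivative pdiff c F (z(c:=t))) (at t))"

lemma has_partialsD: "has_partials F \<Longrightarrow> ((\<lambda>t. F (z(c:=t))) has_real_derivative pdiff c F (z(c:=t))) (at t)"
  unfolding has_partials_def by blast

lemma pdiff_eqI: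
  assumes "\<And>z t. ((\<lambda>t. F (z(c:=t))) has_real_derivative D (z(c:=t))) (at t)"
  shows "pdiff c F = D"
proof
  fix w
  have "((\<lambda>t. F (w(c:=t))) has_real_derivative D (w(c:=w c))) (at (w c))" using assms .
  then show "pdiff c F w = D w" unfolding pdiff_def using DERIV_imp_deriv by fastforce
qed

text \<open>Smoothness is coinductive; closure under \<open>+\<close> and \<open>*\<close> is proved by coinduction
  up to the algebra generated by the smooth functions.\<close>

inductive_set smooth_closure :: "jfun set" where
  base: "smooth_jf F \<Longrightarrow> F \<in> smooth_closure"
| plus: "F \<in> smooth_closure \<Longrightarrow> G \<in> smooth_closure \<Longrightarrow> (\<lambda>z. F z + G z) \<in> smooth_closure"
| times: "F \<in> smooth_closure \<Longrightarrow> G \<in> smooth_closure \<Longrightarrow> (\<lambda>z. F z * G z) \<in> smooth_closure"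

lemma pdiff_plus:
  assumes "has_partials F" "has_partials G"
  shows "pdiff c (\<lambda>z. F z + G z) = (\<lambda>z. pdiff c F z + pdiff c G z)"
  by (rule pdiff_eqI, rule DERIV_add[OF has_partialsD[OF assms(1)] has_partialsD[OF assms(2)]])

lemma pdiff_times:
  assumes "has_partials F" "has_partials G"
  shows "pdiff c (\<lambda>z. F z * G z) = (\<lambda>z. pdiff c F z * G z + F z * pdiff c G z)"
  by (rule pdiff_eqI, rule DERIV_mult'[OF has_partialsD[OF assms(1)] has_partialsD[OF assms(2)], THEN DERIV_cong]) simp

lemma has_partials_plus:
  assumes "has_partials F" "has_partials G" shows "has_partials (\<lambda>z. F z + G z)"
proof (unfold has_partials_def pdiff_plus[OF assms], intro allI)
  fix c z t
  show "((\<lambda>t. F (z(c:=t)) + G (z(c:=t))) has_real_derivative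
     pdiff c F (z(c:=t)) + pdiff c G (z(c:=t))) (at t)"
    by (rule DERIV_add[OF has_partialsD[OF assms(1)] has_partialsD[OF assms(2)]])
qed

lemma has_partials_times:
  assumes "has_partials F" "has_partials G" shows "has_partials (\<lambda>z. F z * G z)"
proof (unfold has_partials_def pdiff_times[OF assms], intro allI)
  fix c z t
  have d: "((\<lambda>t. F (z(c:=t)) * G (z(c:=t))) has_real_derivative
     F (z(c:=t)) * pdiff c G (z(c:=t)) + pdiff c F (z(c:=t)) * G (z(c:=t))) (at t)"
    by (rule DERIV_mult'[OF has_partialsD[OF assms(1)] has_partialsD[OF assms(2)]])
  show "((\<lambda>t. F (z(c:=t)) * G (z(c:=t))) has_real_derivative
     pdiff c F (z(c:=t)) * G (z(c:=t)) + F (z(c:=t)) * pdiff c G (z(c:=t))) (at t)"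
    by (rule DERIV_cong[OF d]) (simp add: ac_simps)
qed

lemma smooth_closure_props: "F \<in> smooth_closure \<Longrightarrow> continuous_on UNIV F \<and> has_partials F \<and> (\<forall>c. pdiff c F \<in> smooth_closure)"
proof (induction rule: smooth_closure.induct)
  case (base F)
  then show ?case using smoothD[OF base] smooth_has_pdiff[OF base] smooth_closure.base by (auto simp: has_partials_def)
next
  case (plus F G)
  have "continuous_on UNIV (\<lambda>z. F z + G z)" using plus by (intro continuous_on_add) auto
  moreover have "has_partials (\<lambda>z. F z + G z)" using plus by (intro has_partials_plus) auto
  moreover have "pdiff c (\<lambda>z. F z + G z) \<in> smooth_closure" for c
  proof -
    have "pdiff c (\<lambda>z. F z + G z) = (\<lambda>z. pdiff c F z + pdiff c G z)"
      using plus by (intro pdiff_plus) auto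
    moreover have "(\<lambda>z. pdiff c F z + pdiff c G z) \<in> smooth_closure"
      using plus by (intro smooth_closure.plus) auto
    ultimately show ?thesis by simp
  qed
  ultimately show ?case by blast
next
  case (times F G)
  have "continuous_on UNIV (\<lambda>z. F z * G z)" using times by (intro continuous_on_mult) auto
  moreover have "has_partials (\<lambda>z. F z * G z)" using times by (intro has_partials_times) auto
  moreover have "pdiff c (\<lambda>z. F z * G z) \<in> smooth_closure" for c
  proof -
    have "pdiff c (\<lambda>z. F z * G z) = (\<lambda>z. pdiff c F z * G z + F z * pdiff c G z)"
      using times by (intro pdiff_times) auto
    moreover have "(\<lambda>z. pdiff c F z * G z + F z * pdiff c G z) \<in> smooth_closure"
      using times by (intro smooth_closure.plus smooth_closure.times) auto
    ultimately show ?thesis by simp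
  qed
  ultimately show ?case by blast
qed

lemma smooth_closure_smooth: "F \<in> smooth_closure \<Longrightarrow> smooth_jf F"
proof (coinduction arbitrary: F rule: smooth_jf.coinduct)
  case (smooth_jf F)
  then show ?case using smooth_closure_props[OF smooth_jf] unfolding has_partials_def
    using real_differentiable_def by (metis fun_upd_triv)
qed

lemma smooth_plus: "smooth_jf F \<Longrightarrow> smooth_jf G \<Longrightarrow> smooth_jf (\<lambda>z. F z + G z)"
  by (rule smooth_closure_smooth, intro smooth_closure.plus smooth_closure.times smooth_closure.base)
lemma smooth_times: "smooth_jf F \<Longrightarrow> smooth_jf G \<Longrightarrow> smooth_jf (\<lambda>z. F z * G z)"
  by (rule smooth_closure_smooth, intro smooth_closure.plus smooth_closure.times smooth_closure.base)

lemma pdiff_const: "pdiff c (\<lambda>z. k) = (\<lambda>z. 0)"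
  unfolding pdiff_def by simp

lemma pdiff_coord: "pdiff c (\<lambda>z. z d) = (\<lambda>z. if c = d then 1 else 0)"
proof (rule pdiff_eqI)
  fix z t
  show "((\<lambda>t. (z(c := t)) d) has_real_derivative (if c = d then 1 else 0)) (at t)"
    by (cases "c = d") (auto intro!: derivative_eq_intros)
qed

lemma smooth_const: "smooth_jf (\<lambda>z. k)"
proof (coinduction arbitrary: k rule: smooth_jf.coinduct)
  case smooth_jf
  then show ?case by (auto simp: pdiff_const)
qed

lemma smooth_coord: "smooth_jf (\<lambda>z. z d)"
proof (rule smooth_jf.intros)
  show "continuous_on UNIV (\<lambda>z. z d)" by simp
  show "\<forall>c z. (\<lambda>t. (z(c := t)) d) differentiable at (z c)"
  proof (intro allI)
    fix c z
    show "(\<lambda>t. (z(c := t)) d) differentiable at (z c)"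
      by (cases "c = d") simp_all
  qed
  show "\<forall>c. smooth_jf (pdiff c (\<lambda>z. z d))"
    unfolding pdiff_coord by (metis smooth_const)
qed

lemma smooth_has_partials: "smooth_jf F \<Longrightarrow> has_partials F"
  using smooth_has_pdiff has_partials_def by blast

definition fin_smooth :: "jfun set" where "fin_smooth = {F. finite (deps F) \<and> smooth_jf F}"

lemma deps_plus: "deps (\<lambda>z. F z + G z) \<subseteq> deps F \<union> deps G"
  by (rule deps_subsetI) (auto simp: notin_deps_upd)
lemma deps_times: "deps (\<lambda>z. F z * G z) \<subseteq> deps F \<union> deps G"
  by (rule deps_subsetI) (auto simp: notin_deps_upd)
lemma deps_const: "deps (\<lambda>z. k) = {}"
  unfolding deps_def by auto
lemma deps_coord: "deps (\<lambda>z. z d) \<subseteq> {d}"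
  by (rule deps_subsetI) auto
lemma fin_smooth_plus: "F \<in> fin_smooth \<Longrightarrow> G \<in> fin_smooth \<Longrightarrow> (\<lambda>z. F z + G z) \<in> fin_smooth"
  unfolding fin_smooth_def using deps_plus[of F G] by (auto intro: smooth_plus finite_subset)
lemma fin_smooth_times: "F \<in> fin_smooth \<Longrightarrow> G \<in> fin_smooth \<Longrightarrow> (\<lambda>z. F z * G z) \<in> fin_smooth"
  unfolding fin_smooth_def using deps_times[of F G] by (auto intro: smooth_times finite_subset)
lemma fin_smooth_const: "(\<lambda>z. k) \<in> fin_smooth"
  unfolding fin_smooth_def by (auto simp: deps_const smooth_const)
lemma fin_smooth_coord: "(\<lambda>z. z d) \<in> fin_smooth"
  unfolding fin_smooth_def using deps_coord[of d] by (auto intro: smooth_coord finite_subset)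
lemma fin_smooth_sum: "finite S \<Longrightarrow> (\<And>s. s \<in> S \<Longrightarrow> f s \<in> fin_smooth) \<Longrightarrow> (\<lambda>z. \<Sum>s\<in>S. f s z) \<in> fin_smooth"
  by (induction S rule: finite_induct) (auto intro: fin_smooth_const fin_smooth_plus)
lemma fin_smooth_pdiff: "F \<in> fin_smooth \<Longrightarrow> pdiff c F \<in> fin_smooth"
  unfolding fin_smooth_def using deps_pdiff[of c F] smoothD(3) by (auto intro: finite_subset)
lemma fin_smooth_has_partials: "F \<in> fin_smooth \<Longrightarrow> has_partials F"
  unfolding fin_smooth_def by (auto intro: smooth_has_partials)
lemma fin_smooth_minus: "F \<in> fin_smooth \<Longrightarrow> G \<in> fin_smooth \<Longrightarrow> (\<lambda>z. F z - G z) \<in> fin_smooth"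
proof -
  assume "F \<in> fin_smooth" "G \<in> fin_smooth"
  then have "(\<lambda>z. F z + (\<lambda>z. -1) z * G z) \<in> fin_smooth" by (intro fin_smooth_plus fin_smooth_times fin_smooth_const)
  then show ?thesis by simp
qed

section \<open>Total derivatives\<close>

lemma tdiff_eq_sum_over:
  assumes "finite S" "deps F \<subseteq> S"
  shows "tdiff i F = (\<lambda>z. pdiff (X i) F z + (\<Sum>c\<in>{c\<in>S. is_U c}. z (shift i c) * pdiff c F z))"
proof
  fix z
  have "(\<Sum>c\<in>{c\<in>deps F. is_U c}. z (shift i c) * pdiff c F z)
      = (\<Sum>c\<in>{c\<in>S. is_U c}. z (shift i c) * pdiff c F z)"
    by (rule sum.mono_neutral_left) (use assms pdiff_notin_deps in fastforce)+
  then show "tdiff i F z = pdiff (X i) F z + (\<Sum>c\<in>{c\<in>S. is_U c}. z (shift i c) * pdiff c F z)"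
    unfolding tdiff_def by simp
qed

lemma tdiff_plus:
  assumes "F \<in> fin_smooth" "G \<in> fin_smooth"
  shows "tdiff i (\<lambda>z. F z + G z) = (\<lambda>z. tdiff i F z + tdiff i G z)"
proof -
  define S where "S = deps F \<union> deps G"
  have fS: "finite S" using assms by (auto simp: fin_smooth_def S_def)
  have pd: "has_partials F" "has_partials G" using assms fin_smooth_has_partials by auto
  have sub: "deps (\<lambda>z. F z + G z) \<subseteq> S" using deps_plus[of F G] by (auto simp: S_def)
  have eF: "tdiff i F = (\<lambda>z. pdiff (X i) F z + (\<Sum>c\<in>{c\<in>S. is_U c}. z (shift i c) * pdiff c F z))"
    by (rule tdiff_eq_sum_over[OF fS]) (auto simp: S_def)
  have eG: "tdiff i G = (\<lambda>z. pdiff (X i) G z + (\<Sum>c\<in>{c\<in>S. is_U c}. z (shift i c) * pdiff c G z))"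
    by (rule tdiff_eq_sum_over[OF fS]) (auto simp: S_def)
  show ?thesis
    unfolding eF eG tdiff_eq_sum_over[OF fS sub] pdiff_plus[OF pd]
    by (auto simp: distrib_left sum.distrib)
qed

lemma tdiff_times:
  assumes "F \<in> fin_smooth" "G \<in> fin_smooth"
  shows "tdiff i (\<lambda>z. F z * G z) = (\<lambda>z. tdiff i F z * G z + F z * tdiff i G z)"
proof -
  define S where "S = deps F \<union> deps G"
  have fS: "finite S" using assms by (auto simp: fin_smooth_def S_def)
  have pd: "has_partials F" "has_partials G" using assms fin_smooth_has_partials by auto
  have sub: "deps (\<lambda>z. F z * G z) \<subseteq> S" using deps_times[of F G] by (auto simp: S_def)
  have eF: "tdiff i F = (\<lambda>z. pdiff (X i) F z + (\<Sum>c\<in>{c\<in>S. is_U c}. z (shift i c) * pdiff c F z))"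
    by (rule tdiff_eq_sum_over[OF fS]) (auto simp: S_def)
  have eG: "tdiff i G = (\<lambda>z. pdiff (X i) G z + (\<Sum>c\<in>{c\<in>S. is_U c}. z (shift i c) * pdiff c G z))"
    by (rule tdiff_eq_sum_over[OF fS]) (auto simp: S_def)
  show ?thesis
    unfolding eF eG tdiff_eq_sum_over[OF fS sub] pdiff_times[OF pd]
    by (auto simp: algebra_simps sum.distrib sum_distrib_left sum_distrib_right)
qed

lemma tdiff_const: "tdiff i (\<lambda>z. k) = (\<lambda>z. 0)"
  unfolding tdiff_def deps_const pdiff_const by simp

lemma tdiff_coordU:
  assumes "is_U c"
  shows "tdiff i (\<lambda>z. z c) = (\<lambda>z. z (shift i c))"
proof -
  have "tdiff i (\<lambda>z. z c) = (\<lambda>z. pdiff (X i) (\<lambda>z. z c) z + (\<Sum>c'\<in>{c'\<in>{c}. is_U c'}. z (shift i c') * pdiff c' (\<lambda>z. z c) z))"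
    by (rule tdiff_eq_sum_over) (auto simp: deps_coord)
  also have "\<dots> = (\<lambda>z. z (shift i c))"
  proof -
    have "{c'\<in>{c}. is_U c'} = {c}" using assms by auto
    then show ?thesis using assms by (cases c) (auto simp: pdiff_coord)
  qed
  finally show ?thesis .
qed

lemma fin_smooth_tdiff: "F \<in> fin_smooth \<Longrightarrow> tdiff i F \<in> fin_smooth"
proof -
  assume F: "F \<in> fin_smooth"
  then have "finite (deps F)" by (auto simp: fin_smooth_def)
  then have "(\<lambda>z. pdiff (X i) F z + (\<Sum>c\<in>{c\<in>deps F. is_U c}. z (shift i c) * pdiff c F z)) \<in> fin_smooth"
    using F by (intro fin_smooth_plus fin_smooth_pdiff fin_smooth_sum fin_smooth_times fin_smooth_coord) auto
  then show ?thesis unfolding tdiff_def .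
qed

lemma deps_tdiff: "deps (tdiff i F) \<subseteq> deps F \<union> shift i ` deps F"
proof (rule deps_subsetI)
  fix z e t assume e: "e \<notin> deps F \<union> shift i ` deps F"
  have 1: "pdiff c F (z(e:=t)) = pdiff c F z" for c
    using e deps_pdiff[of c F] notin_deps_upd by blast
  have 2: "(z(e:=t)) (shift i c) = z (shift i c)" if "c \<in> deps F" for c
    using e that by auto
  show "tdiff i F (z(e := t)) = tdiff i F z"
    unfolding tdiff_def using 1 2 by (auto intro!: sum.cong)
qed

lemma tdiff_minus:
  assumes "F \<in> fin_smooth" "G \<in> fin_smooth"
  shows "tdiff i (\<lambda>z. F z - G z) = (\<lambda>z. tdiff i F z - tdiff i G z)"
proof -
  have mG: "(\<lambda>z. (\<lambda>z. -1) z * G z) \<in> fin_smooth" using assms by (intro fin_smooth_times fin_smooth_const)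
  have "tdiff i (\<lambda>z. F z - G z) = tdiff i (\<lambda>z. F z + (\<lambda>z. (\<lambda>z. -1) z * G z) z)" by simp
  also have "\<dots> = (\<lambda>z. tdiff i F z + tdiff i (\<lambda>z. (\<lambda>z. -1) z * G z) z)"
    by (rule tdiff_plus[OF assms(1) mG])
  also have "\<dots> = (\<lambda>z. tdiff i F z - tdiff i G z)"
    unfolding tdiff_times[OF fin_smooth_const assms(2)] tdiff_const by simp
  finally show ?thesis .
qed

lemma mixed_pdiff_mean_value:
  fixes z0 :: jet
  assumes F: "smooth_jf F" and cd: "c \<noteq> d" and h: "h > 0"
  defines "W \<equiv> \<lambda>s t. z0(c:=s, d:=t)"
  shows "\<exists>\<xi> \<eta> \<xi>' \<eta>'. z0 c < \<xi> \<and> \<xi> < z0 c + h \<and> z0 d < \<eta> \<and> \<eta> < z0 d + h \<and>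
     z0 c < \<xi>' \<and> \<xi>' < z0 c + h \<and> z0 d < \<eta>' \<and> \<eta>' < z0 d + h \<and>
     pdiff d (pdiff c F) (W \<xi> \<eta>) = pdiff c (pdiff d F) (W \<xi>' \<eta>')"
proof -
  have Wt: "W s t = z0(d:=t, c:=s)" for s t unfolding W_def using cd by (simp add: fun_upd_twist)
  have Fc: "smooth_jf (pdiff c F)" "smooth_jf (pdiff d F)" using smoothD(3)[OF F] by auto
  have da: "DERIV (\<lambda>s. F (W s t)) s :> pdiff c F (W s t)" for s t
    unfolding Wt by (rule smooth_has_pdiff[OF F])
  have db: "DERIV (\<lambda>t. pdiff c F (W s t)) t :> pdiff d (pdiff c F) (W s t)" for s t
    unfolding W_def by (rule smooth_has_pdiff[OF Fc(1)])
  have dc: "DERIV (\<lambda>t. F (W s t)) t :> pdiff d F (W s t)" for s t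
    unfolding W_def by (rule smooth_has_pdiff[OF F])
  have dd: "DERIV (\<lambda>s. pdiff d F (W s t)) s :> pdiff c (pdiff d F) (W s t)" for s t
    unfolding Wt by (rule smooth_has_pdiff[OF Fc(2)])
  define s0 where "s0 = z0 c"
  define t0 where "t0 = z0 d"
  have lt: "s0 < s0 + h" "t0 < t0 + h" using h by auto
  obtain \<xi> where \<xi>: "s0 < \<xi>" "\<xi> < s0 + h"
    "(F (W (s0+h) (t0+h)) - F (W (s0+h) t0)) - (F (W s0 (t0+h)) - F (W s0 t0))
       = h * (pdiff c F (W \<xi> (t0+h)) - pdiff c F (W \<xi> t0))"
    using MVT2[OF lt(1), of "\<lambda>s. F (W s (t0+h)) - F (W s t0)" "\<lambda>s. pdiff c F (W s (t0+h)) - pdiff c F (W s t0)"]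
      DERIV_diff[OF da da] by auto
  obtain \<eta> where \<eta>: "t0 < \<eta>" "\<eta> < t0 + h"
    "pdiff c F (W \<xi> (t0+h)) - pdiff c F (W \<xi> t0) = h * pdiff d (pdiff c F) (W \<xi> \<eta>)"
    using MVT2[OF lt(2), of "\<lambda>t. pdiff c F (W \<xi> t)" "\<lambda>t. pdiff d (pdiff c F) (W \<xi> t)"] db by auto
  obtain \<eta>' where \<eta>': "t0 < \<eta>'" "\<eta>' < t0 + h"
    "(F (W (s0+h) (t0+h)) - F (W s0 (t0+h))) - (F (W (s0+h) t0) - F (W s0 t0))
       = h * (pdiff d F (W (s0+h) \<eta>') - pdiff d F (W s0 \<eta>'))"
    using MVT2[OF lt(2), of "\<lambda>t. F (W (s0+h) t) - F (W s0 t)" "\<lambda>t. pdiff d F (W (s0+h) t) - pdiff d F (W s0 t)"]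
      DERIV_diff[OF dc dc] by auto
  obtain \<xi>' where \<xi>': "s0 < \<xi>'" "\<xi>' < s0 + h"
    "pdiff d F (W (s0+h) \<eta>') - pdiff d F (W s0 \<eta>') = h * pdiff c (pdiff d F) (W \<xi>' \<eta>')"
    using MVT2[OF lt(1), of "\<lambda>s. pdiff d F (W s \<eta>')" "\<lambda>s. pdiff c (pdiff d F) (W s \<eta>')"] dd by auto
  have "h * (h * pdiff d (pdiff c F) (W \<xi> \<eta>)) = h * (h * pdiff c (pdiff d F) (W \<xi>' \<eta>'))"
    using \<xi>(3) \<eta>(3) \<eta>'(3) \<xi>'(3) by (simp add: algebra_simps)
  then have "pdiff d (pdiff c F) (W \<xi> \<eta>) = pdiff c (pdiff d F) (W \<xi>' \<eta>')" using h by simp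
  then show ?thesis using \<xi> \<eta> \<xi>' \<eta>' unfolding s0_def t0_def by blast
qed

lemma continuous_on_fun_upd2: "continuous_on UNIV (\<lambda>p::real\<times>real. z0(c:=fst p, d:=snd p))"
proof (rule continuous_on_coordinatewise_then_product)
  fix e
  show "continuous_on UNIV (\<lambda>p::real\<times>real. (z0(c:=fst p, d:=snd p)) e)"
    by (cases "e = d"; cases "e = c") (auto intro!: continuous_intros)
qed

lemma continuous_tendsto_fun_upd2:
  fixes G :: jfun
  assumes "continuous_on UNIV G" "a \<longlonglongrightarrow> z0 c" "b \<longlonglongrightarrow> z0 d"
  shows "(\<lambda>k. G (z0(c := a k, d := b k))) \<longlonglongrightarrow> G z0"
proof -
  have cont: "continuous_on UNIV (\<lambda>p::real\<times>real. G (z0(c := fst p, d := snd p)))"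
    using continuous_on_compose2[OF assms(1) continuous_on_fun_upd2] by auto
  have "(\<lambda>k. (a k, b k)) \<longlonglongrightarrow> (z0 c, z0 d)" using assms(2,3) by (rule tendsto_Pair)
  from continuous_on_tendsto_compose[OF cont this]
  have "(\<lambda>k. G (z0(c := fst (a k, b k), d := snd (a k, b k))))
      \<longlonglongrightarrow> G (z0(c := fst (z0 c, z0 d), d := snd (z0 c, z0 d)))"
    by auto
  then show ?thesis by simp
qed

lemma squeeze_inverse_Suc:
  fixes x :: real
  assumes "\<And>k. x < f k \<and> f k < x + inverse (real (Suc k))"
  shows "f \<longlonglongrightarrow> x"
proof (rule tendsto_sandwich[OF _ _ tendsto_const])
  show "(\<lambda>k. x + inverse (real (Suc k))) \<longlonglongrightarrow> x"
    using tendsto_add[OF tendsto_const LIMSEQ_inverse_real_of_nat, of x] by simp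
qed (use assms less_imp_le in \<open>auto intro: always_eventually\<close>)

lemma pdiff_commute:
  assumes F: "smooth_jf F"
  shows "pdiff c (pdiff d F) = pdiff d (pdiff c F)"
proof
  fix z0
  show "pdiff c (pdiff d F) z0 = pdiff d (pdiff c F) z0"
  proof (cases "c = d")
    case False
    have "\<forall>k. \<exists>\<xi> \<eta> \<xi>' \<eta>'. z0 c < \<xi> \<and> \<xi> < z0 c + inverse (real (Suc k)) \<and>
        z0 d < \<eta> \<and> \<eta> < z0 d + inverse (real (Suc k)) \<and>
        z0 c < \<xi>' \<and> \<xi>' < z0 c + inverse (real (Suc k)) \<and>
        z0 d < \<eta>' \<and> \<eta>' < z0 d + inverse (real (Suc k)) \<and>
        pdiff d (pdiff c F) (z0(c := \<xi>, d := \<eta>)) = pdiff c (pdiff d F) (z0(c := \<xi>', d := \<eta>'))"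
      using mixed_pdiff_mean_value[OF F False] by simp
    then obtain a b a' b' where box: "\<And>k. z0 c < a k \<and> a k < z0 c + inverse (real (Suc k)) \<and>
        z0 d < b k \<and> b k < z0 d + inverse (real (Suc k)) \<and>
        z0 c < a' k \<and> a' k < z0 c + inverse (real (Suc k)) \<and>
        z0 d < b' k \<and> b' k < z0 d + inverse (real (Suc k))"
      and eq: "\<And>k. pdiff d (pdiff c F) (z0(c := a k, d := b k))
        = pdiff c (pdiff d F) (z0(c := a' k, d := b' k))"
      by metis
    have lim: "a \<longlonglongrightarrow> z0 c" "b \<longlonglongrightarrow> z0 d" "a' \<longlonglongrightarrow> z0 c" "b' \<longlonglongrightarrow> z0 d"
      using box by (auto intro!: squeeze_inverse_Suc)
    have cont: "continuous_on UNIV (pdiff d (pdiff c F))" "continuous_on UNIV (pdiff c (pdiff d F))"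
      using smoothD(1)[OF smoothD(3)[OF smoothD(3)[OF F]]] by blast+
    have "(\<lambda>k. pdiff d (pdiff c F) (z0(c := a k, d := b k))) \<longlonglongrightarrow> pdiff d (pdiff c F) z0"
      using cont(1) lim(1,2) by (rule continuous_tendsto_fun_upd2)
    moreover have "(\<lambda>k. pdiff d (pdiff c F) (z0(c := a k, d := b k))) \<longlonglongrightarrow> pdiff c (pdiff d F) z0"
      unfolding eq using cont(2) lim(3,4) by (rule continuous_tendsto_fun_upd2)
    ultimately show ?thesis using LIMSEQ_unique by metis
  qed simp
qed

lemma tdiff_sum:
  assumes "finite S" "\<And>s. s \<in> S \<Longrightarrow> f s \<in> fin_smooth"
  shows "tdiff i (\<lambda>z. \<Sum>s\<in>S. f s z) = (\<lambda>z. \<Sum>s\<in>S. tdiff i (f s) z)"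
  using assms
proof (induction S rule: finite_induct)
  case empty then show ?case by (simp add: tdiff_const)
next
  case (insert x S)
  have "tdiff i (\<lambda>z. \<Sum>s\<in>insert x S. f s z) = tdiff i (\<lambda>z. f x z + (\<lambda>z. \<Sum>s\<in>S. f s z) z)"
    using insert by simp
  also have "\<dots> = (\<lambda>z. tdiff i (f x) z + tdiff i (\<lambda>z. \<Sum>s\<in>S. f s z) z)"
    using insert by (intro tdiff_plus fin_smooth_sum) auto
  finally show ?case using insert by simp
qed

lemma shift_commute: "shift i (shift j c) = shift j (shift i c)"
  by (cases c) (auto simp: madd_def add.commute add.left_commute)

lemma is_U_shift: "is_U (shift i c) = is_U c"
  by (cases c) auto

lemma tdiff_tdiff_expand:
  assumes F: "F \<in> fin_smooth"
  defines "DU \<equiv> {c\<in>deps F. is_U c}"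
  shows "tdiff i (tdiff j F) z =
     (pdiff (X i) (pdiff (X j) F) z + (\<Sum>c\<in>DU. z (shift i c) * pdiff c (pdiff (X j) F) z))
   + (\<Sum>e\<in>DU. z (shift i (shift j e)) * pdiff e F z)
   + (\<Sum>e\<in>DU. z (shift j e) * pdiff (X i) (pdiff e F) z)
   + (\<Sum>e\<in>DU. \<Sum>c\<in>DU. z (shift j e) * z (shift i c) * pdiff c (pdiff e F) z)"
proof -
  have fD: "finite (deps F)" using F by (auto simp: fin_smooth_def)
  have fDU: "finite DU" using fD by (auto simp: DU_def)
  have tpd: "tdiff i (pdiff c F) = (\<lambda>z. pdiff (X i) (pdiff c F) z + (\<Sum>c'\<in>DU. z (shift i c') * pdiff c' (pdiff c F) z))" for c
    unfolding DU_def by (rule tdiff_eq_sum_over[OF fD deps_pdiff])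
  have SAp: "pdiff c F \<in> fin_smooth" for c using F by (rule fin_smooth_pdiff)
  have tj: "tdiff j F = (\<lambda>z. pdiff (X j) F z + (\<lambda>z. \<Sum>e\<in>DU. (\<lambda>z. z (shift j e)) z * pdiff e F z) z)"
    unfolding tdiff_def DU_def by simp
  have "tdiff i (tdiff j F) = (\<lambda>z. tdiff i (pdiff (X j) F) z + tdiff i (\<lambda>z. \<Sum>e\<in>DU. (\<lambda>z. z (shift j e)) z * pdiff e F z) z)"
    unfolding tj by (rule tdiff_plus) (use SAp fDU in \<open>auto intro!: fin_smooth_sum fin_smooth_times fin_smooth_coord\<close>)
  also have "\<dots> = (\<lambda>z. tdiff i (pdiff (X j) F) z + (\<Sum>e\<in>DU. tdiff i (\<lambda>z. (\<lambda>z. z (shift j e)) z * pdiff e F z) z))"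
    by (subst tdiff_sum) (use SAp fDU in \<open>auto intro!: fin_smooth_times fin_smooth_coord\<close>)
  also have "\<dots> = (\<lambda>z. tdiff i (pdiff (X j) F) z + (\<Sum>e\<in>DU. z (shift i (shift j e)) * pdiff e F z + z (shift j e) * tdiff i (pdiff e F) z))"
  proof -
    have "e \<in> DU \<Longrightarrow> tdiff i (\<lambda>z. (\<lambda>z. z (shift j e)) z * pdiff e F z) = (\<lambda>z. z (shift i (shift j e)) * pdiff e F z + z (shift j e) * tdiff i (pdiff e F) z)" for e
      unfolding tdiff_times[OF fin_smooth_coord SAp] using tdiff_coordU[of "shift j e" i] by (auto simp: DU_def is_U_shift)
    then show ?thesis by (auto intro!: sum.cong ext)
  qed
  finally show ?thesis
    unfolding tpd by (simp add: sum.distrib distrib_left sum_distrib_left algebra_simps)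
qed

lemma tdiff_commute:
  assumes F: "F \<in> fin_smooth"
  shows "tdiff i (tdiff j F) = tdiff j (tdiff i F)"
proof
  fix z
  define DU where "DU = {c\<in>deps F. is_U c}"
  have sm: "smooth_jf F" using F by (auto simp: fin_smooth_def)
  have s1: "pdiff a (pdiff b F) = pdiff b (pdiff a F)" for a b using pdiff_commute[OF sm] .
  have A: "pdiff (X i) (pdiff (X j) F) z = pdiff (X j) (pdiff (X i) F) z" using s1 by simp
  have B: "(\<Sum>c\<in>DU. z (shift i c) * pdiff c (pdiff (X j) F) z) = (\<Sum>e\<in>DU. z (shift i e) * pdiff (X j) (pdiff e F) z)"
    using s1 by simp
  have B': "(\<Sum>c\<in>DU. z (shift j c) * pdiff c (pdiff (X i) F) z) = (\<Sum>e\<in>DU. z (shift j e) * pdiff (X i) (pdiff e F) z)"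
    using s1 by simp
  have C: "(\<Sum>e\<in>DU. z (shift i (shift j e)) * pdiff e F z) = (\<Sum>e\<in>DU. z (shift j (shift i e)) * pdiff e F z)"
    by (simp add: shift_commute)
  have D: "(\<Sum>e\<in>DU. \<Sum>c\<in>DU. z (shift j e) * z (shift i c) * pdiff c (pdiff e F) z)
        = (\<Sum>e\<in>DU. \<Sum>c\<in>DU. z (shift i e) * z (shift j c) * pdiff c (pdiff e F) z)"
    by (subst sum.swap) (simp add: s1 mult.commute mult.left_commute)
  show "tdiff i (tdiff j F) z = tdiff j (tdiff i F) z"
    unfolding tdiff_tdiff_expand[OF F, of i j z] tdiff_tdiff_expand[OF F, of j i z] DU_def[symmetric]
    using A B B' C D by simp
qed

lemma tdiffK_0[simp]: "tdiffK 0 M F = F"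
  unfolding tdiffK_def by simp

lemma tdiffK_Suc: "tdiffK (Suc p) M F = tdiffK p M ((tdiff p ^^ M p) F)"
  unfolding tdiffK_def by simp

lemma fin_smooth_funpow: "F \<in> fin_smooth \<Longrightarrow> (tdiff i ^^ m) F \<in> fin_smooth"
  by (induction m) (auto intro: fin_smooth_tdiff)

lemma fin_smooth_tdiffK: "F \<in> fin_smooth \<Longrightarrow> tdiffK p M F \<in> fin_smooth"
  by (induction p arbitrary: F) (auto simp: tdiffK_Suc intro: fin_smooth_funpow)

lemma tdiff_funpow_commute: "F \<in> fin_smooth \<Longrightarrow> tdiff i ((tdiff j ^^ k) F) = (tdiff j ^^ k) (tdiff i F)"
proof (induction k)
  case 0 then show ?case by simp
next
  case (Suc k)
  have "tdiff i ((tdiff j ^^ Suc k) F) = tdiff i (tdiff j ((tdiff j ^^ k) F))" by simp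
  also have "\<dots> = tdiff j (tdiff i ((tdiff j ^^ k) F))"
    using Suc by (intro tdiff_commute fin_smooth_funpow)
  also have "\<dots> = (tdiff j ^^ Suc k) (tdiff i F)" using Suc by simp
  finally show ?case .
qed

lemma funpow_tdiff_commute: "F \<in> fin_smooth \<Longrightarrow> (tdiff i ^^ a) ((tdiff j ^^ b) F) = (tdiff j ^^ b) ((tdiff i ^^ a) F)"
proof (induction a)
  case 0 then show ?case by simp
next
  case (Suc a)
  have "(tdiff i ^^ Suc a) ((tdiff j ^^ b) F) = tdiff i ((tdiff j ^^ b) ((tdiff i ^^ a) F))"
    using Suc by simp
  also have "\<dots> = (tdiff j ^^ b) (tdiff i ((tdiff i ^^ a) F))"
    using Suc by (intro tdiff_funpow_commute fin_smooth_funpow)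
  finally show ?case by simp
qed

lemma funpow_tdiffK_commute: "F \<in> fin_smooth \<Longrightarrow> (tdiff i ^^ a) (tdiffK p M F) = tdiffK p M ((tdiff i ^^ a) F)"
proof (induction p arbitrary: F)
  case 0 then show ?case by simp
next
  case (Suc p)
  have "(tdiff i ^^ a) (tdiffK (Suc p) M F) = tdiffK p M ((tdiff i ^^ a) ((tdiff p ^^ M p) F))"
    unfolding tdiffK_Suc using Suc by (intro Suc.IH fin_smooth_funpow)
  also have "\<dots> = tdiffK (Suc p) M ((tdiff i ^^ a) F)"
    unfolding tdiffK_Suc using Suc by (simp add: funpow_tdiff_commute)
  finally show ?case .
qed

lemma tdiffK_madd: "F \<in> fin_smooth \<Longrightarrow> tdiffK p K (tdiffK p L F) = tdiffK p (madd K L) F"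
proof (induction p arbitrary: F)
  case 0 then show ?case by simp
next
  case (Suc p)
  have "tdiffK (Suc p) K (tdiffK (Suc p) L F) = tdiffK p K ((tdiff p ^^ K p) (tdiffK p L ((tdiff p ^^ L p) F)))"
    unfolding tdiffK_Suc ..
  also have "\<dots> = tdiffK p K (tdiffK p L ((tdiff p ^^ K p) ((tdiff p ^^ L p) F)))"
    using Suc by (simp add: funpow_tdiffK_commute fin_smooth_funpow)
  also have "\<dots> = tdiffK p (madd K L) ((tdiff p ^^ K p) ((tdiff p ^^ L p) F))"
    using Suc by (intro Suc.IH fin_smooth_funpow)
  also have "\<dots> = tdiffK (Suc p) (madd K L) F"
    unfolding tdiffK_Suc by (simp add: madd_def funpow_add)
  finally show ?case .
qed

lemma tdiffK_cong: "(\<And>k. k < p \<Longrightarrow> M k = M' k) \<Longrightarrow> tdiffK p M F = tdiffK p M' F"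
  by (induction p arbitrary: F) (auto simp: tdiffK_Suc)

lemma tdiffK_zero: "(\<And>k. k < p \<Longrightarrow> M k = 0) \<Longrightarrow> tdiffK p M F = F"
proof -
  assume "\<And>k. k < p \<Longrightarrow> M k = 0"
  then have "tdiffK p M F = tdiffK p (\<lambda>k. 0) F" by (rule tdiffK_cong)
  also have "\<dots> = F" by (induction p arbitrary: F) (auto simp: tdiffK_Suc)
  finally show ?thesis .
qed

lemma tdiffK_unit: "i < p \<Longrightarrow> tdiffK p (unit_mi i) F = tdiff i F"
proof (induction p arbitrary: F)
  case 0 then show ?case by simp
next
  case (Suc p)
  show ?case
  proof (cases "i = p")
    case True
    then show ?thesis unfolding tdiffK_Suc by (subst tdiffK_zero) (auto simp: unit_mi_def)
  next
    case False
    then have "i < p" using Suc by auto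
    then show ?thesis unfolding tdiffK_Suc using False Suc by (simp add: unit_mi_def)
  qed
qed

lemma tdiff_tdiffK:
  assumes "F \<in> fin_smooth" "i < p"
  shows "tdiff i (tdiffK p M F) = tdiffK p (madd M (unit_mi i)) F"
proof -
  have "tdiff i (tdiffK p M F) = tdiffK p (unit_mi i) (tdiffK p M F)" using tdiffK_unit assms by simp
  also have "\<dots> = tdiffK p (madd (unit_mi i) M) F" using assms by (simp add: tdiffK_madd)
  finally show ?thesis by (simp add: madd_def add.commute)
qed

lemma tdiff_funpow_minus: "F \<in> fin_smooth \<Longrightarrow> G \<in> fin_smooth \<Longrightarrow> (tdiff i ^^ m) (\<lambda>z. F z - G z) = (\<lambda>z. (tdiff i ^^ m) F z - (tdiff i ^^ m) G z)"
  by (induction m) (auto simp: tdiff_minus fin_smooth_funpow)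

lemma tdiffK_minus: "F \<in> fin_smooth \<Longrightarrow> G \<in> fin_smooth \<Longrightarrow> tdiffK p M (\<lambda>z. F z - G z) = (\<lambda>z. tdiffK p M F z - tdiffK p M G z)"
  by (induction p arbitrary: F G) (auto simp: tdiffK_Suc tdiff_funpow_minus fin_smooth_funpow)

fun shift_mi :: "mindex \<Rightarrow> coord \<Rightarrow> coord" where
  "shift_mi N (U j K) = U j (madd K N)"
| "shift_mi N (X k) = X k"

lemma shift_mi_shift_mi: "shift_mi N (shift_mi N' c) = shift_mi (madd N' N) c"
  by (cases c) (auto simp: madd_def add.assoc)

lemma shift_eq_shift_mi: "shift i c = shift_mi (unit_mi i) c"
  by (cases c) auto

lemma shift_mi_zero: "shift_mi (\<lambda>k. 0) c = c"
  by (cases c) (auto simp: madd_def)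

lemma is_U_shift_mi: "is_U (shift_mi N c) = is_U c"
  by (cases c) auto

lemma tdiff_funpow_coord: "is_U c \<Longrightarrow> (tdiff i ^^ m) (\<lambda>z. z c) = (\<lambda>z. z (shift_mi (\<lambda>k. if k = i then m else 0) c))"
proof (induction m)
  case 0 then show ?case by (simp add: shift_mi_zero)
next
  case (Suc m)
  have "(tdiff i ^^ Suc m) (\<lambda>z. z c) = tdiff i (\<lambda>z. z (shift_mi (\<lambda>k. if k = i then m else 0) c))"
    using Suc by simp
  also have "\<dots> = (\<lambda>z. z (shift i (shift_mi (\<lambda>k. if k = i then m else 0) c)))"
    using Suc by (intro tdiff_coordU) (simp add: is_U_shift_mi)
  also have "\<dots> = (\<lambda>z. z (shift_mi (\<lambda>k. if k = i then Suc m else 0) c))"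
  proof -
    have "madd (\<lambda>k. if k = i then m else 0) (unit_mi i) = (\<lambda>k. if k = i then Suc m else 0)"
      by (auto simp: madd_def unit_mi_def)
    then show ?thesis unfolding shift_eq_shift_mi shift_mi_shift_mi by simp
  qed
  finally show ?case .
qed

lemma tdiffK_coord: "is_U c \<Longrightarrow> tdiffK p M (\<lambda>z. z c) = (\<lambda>z. z (shift_mi (\<lambda>k. if k < p then M k else 0) c))"
proof (induction p arbitrary: c)
  case 0 then show ?case by (simp add: shift_mi_zero)
next
  case (Suc p)
  have "tdiffK (Suc p) M (\<lambda>z. z c) = tdiffK p M (\<lambda>z. z (shift_mi (\<lambda>k. if k = p then M p else 0) c))"
    unfolding tdiffK_Suc using Suc by (simp add: tdiff_funpow_coord)
  also have "\<dots> = (\<lambda>z. z (shift_mi (\<lambda>k. if k < p then M k else 0) (shift_mi (\<lambda>k. if k = p then M p else 0) c)))"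
    using Suc by (simp add: is_U_shift_mi)
  also have "\<dots> = (\<lambda>z. z (shift_mi (\<lambda>k. if k < Suc p then M k else 0) c))"
  proof -
    have "madd (\<lambda>k. if k = p then M p else 0) (\<lambda>k. if k < p then M k else 0) = (\<lambda>k. if k < Suc p then M k else 0)"
      unfolding madd_def by (rule ext) (simp add: less_Suc_eq)
    then show ?thesis unfolding shift_mi_shift_mi by simp
  qed
  finally show ?case .
qed

lemma deps_tdiff_funpow: "deps ((tdiff i ^^ m) F) \<subseteq> {shift_mi (\<lambda>k. if k = i then m' else 0) c | c m'. c \<in> deps F \<and> m' \<le> m}"
proof (induction m)
  case 0 then show ?case by (force simp: shift_mi_zero)
next
  case (Suc m)
  show ?case
  proof
    fix e assume "e \<in> deps ((tdiff i ^^ Suc m) F)"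
    then have "e \<in> deps ((tdiff i ^^ m) F) \<or> e \<in> shift i ` deps ((tdiff i ^^ m) F)"
      using deps_tdiff[of i "(tdiff i ^^ m) F"] by auto
    then show "e \<in> {shift_mi (\<lambda>k. if k = i then m' else 0) c | c m'. c \<in> deps F \<and> m' \<le> Suc m}"
    proof
      assume "e \<in> deps ((tdiff i ^^ m) F)"
      then show ?thesis using Suc by force
    next
      assume "e \<in> shift i ` deps ((tdiff i ^^ m) F)"
      then obtain c m' where "c \<in> deps F" "m' \<le> m" "e = shift i (shift_mi (\<lambda>k. if k = i then m' else 0) c)"
        using Suc by blast
      moreover have "shift i (shift_mi (\<lambda>k. if k = i then m' else 0) c) = shift_mi (\<lambda>k. if k = i then Suc m' else 0) c"
        unfolding shift_eq_shift_mi shift_mi_shift_mi by (rule arg_cong[where f="\<lambda>N. shift_mi N c"]) (auto simp: madd_def unit_mi_def)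
      ultimately show ?thesis by force
    qed
  qed
qed

definition shifts_within :: "nat \<Rightarrow> mindex \<Rightarrow> coord set \<Rightarrow> coord set" where
  "shifts_within p M D = {shift_mi N c | c N. c \<in> D \<and> (\<forall>k. N k \<le> M k) \<and> (\<forall>k\<ge>p. N k = 0)}"

lemma deps_tdiffK: "deps (tdiffK p M F) \<subseteq> shifts_within p M (deps F)"
proof (induction p arbitrary: F)
  case 0 then show ?case by (force simp: shifts_within_def shift_mi_zero)
next
  case (Suc p)
  show ?case
  proof
    fix e assume "e \<in> deps (tdiffK (Suc p) M F)"
    then have "e \<in> shifts_within p M (deps ((tdiff p ^^ M p) F))" using Suc unfolding tdiffK_Suc by blast
    then obtain c N where cN: "e = shift_mi N c" "c \<in> deps ((tdiff p ^^ M p) F)" "\<forall>k. N k \<le> M k" "\<forall>k\<ge>p. N k = 0"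
      unfolding shifts_within_def by blast
    then obtain c0 m' where c0: "c0 \<in> deps F" "m' \<le> M p" "c = shift_mi (\<lambda>k. if k = p then m' else 0) c0"
      using deps_tdiff_funpow by blast
    have "e = shift_mi (madd (\<lambda>k. if k = p then m' else 0) N) c0" using cN c0 by (simp add: shift_mi_shift_mi)
    moreover have "\<forall>k. madd (\<lambda>k. if k = p then m' else 0) N k \<le> M k" "\<forall>k\<ge>Suc p. madd (\<lambda>k. if k = p then m' else 0) N k = 0"
      using cN c0 by (auto simp: madd_def)
    ultimately show "e \<in> shifts_within (Suc p) M (deps F)" unfolding shifts_within_def using c0 by blast
  qed
qed

section \<open>Rankings\<close>

lemma incseq_subseq_nat: "\<exists>f. strict_mono f \<and> incseq (\<lambda>n. (s::nat\<Rightarrow>nat) (f n))"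
proof -
  obtain f where f: "strict_mono f" "monoseq (\<lambda>n. s (f n))" using seq_monosub by blast
  show ?thesis
  proof (cases "incseq (\<lambda>n. s (f n))")
    case True then show ?thesis using f by blast
  next
    case False
    then have dec: "\<And>m n. m \<le> n \<Longrightarrow> s (f n) \<le> s (f m)" using f(2) unfolding monoseq_def incseq_def by blast
    obtain N where N: "\<And>n. s (f N) \<le> s (f n)"
      using ex_has_least_nat[of "\<lambda>n. True" 0 "\<lambda>n. s (f n)"] by auto
    have "incseq (\<lambda>n. s (f (N + n)))"
      unfolding incseq_def
    proof (intro allI impI)
      fix m n :: nat assume "m \<le> n"
      have "s (f (N + n)) \<le> s (f (N + m))" using dec \<open>m \<le> n\<close> by simp
      moreover have "s (f (N + m)) \<le> s (f N)" using dec by simp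
      ultimately show "s (f (N + m)) \<le> s (f (N + n))" using N[of "N + n"] by linarith
    qed
    moreover have "strict_mono (\<lambda>n. f (N + n))" using f(1) unfolding strict_mono_def by simp
    ultimately show ?thesis by blast
  qed
qed

lemma dickson_subseq: "\<exists>f. strict_mono f \<and> (\<forall>k<p. incseq (\<lambda>n. (s::nat \<Rightarrow> mindex) (f n) k))"
proof (induction p)
  case 0
  have "strict_mono (\<lambda>n::nat. n)" by (simp add: strict_mono_def)
  then show ?case by blast
next
  case (Suc p)
  then obtain f where f: "strict_mono f" "\<forall>k<p. incseq (\<lambda>n. s (f n) k)" by blast
  obtain g where g: "strict_mono g" "incseq (\<lambda>n. s (f (g n)) p)" using incseq_subseq_nat[of "\<lambda>n. s (f n) p"] by blast
  have sm: "strict_mono (\<lambda>n. f (g n))" using f(1) g(1) unfolding strict_mono_def by blast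
  have inc: "incseq (\<lambda>n. s (f (g n)) k)" if "k < Suc p" for k
  proof (cases "k = p")
    case True then show ?thesis using g by simp
  next
    case False
    then have k: "k < p" using that by simp
    have m: "mono (\<lambda>n. s (f n) k)" using f(2) k by blast
    show ?thesis
    proof (rule monoI)
      fix a b :: nat assume "a \<le> b"
      then have "g a \<le> g b" using g(1) by (simp add: strict_mono_less_eq)
      then show "s (f (g a)) k \<le> s (f (g b)) k" by (rule monoD[OF m])
    qed
  qed
  show ?case
    by (rule exI[of _ "\<lambda>n. f (g n)"]) (use sm inc in blast)
qed

definition rank_dom :: "nat \<Rightarrow> nat \<Rightarrow> (nat \<times> mindex) set" where
  "rank_dom p q = {(j, K). j < q \<and> is_mindex p K}"

definition strict_rank :: "((nat \<times> mindex) \<times> (nat \<times> mindex)) set \<Rightarrow> ((nat \<times> mindex) \<times> (nat \<times> mindex)) set" where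
  "strict_rank R = {(x, y). (x, y) \<in> R \<and> x \<noteq> y}"

lemma rankingD:
  assumes "is_ranking p q R"
  shows "R \<subseteq> rank_dom p q \<times> rank_dom p q" "trans R" "antisym R"
    "\<And>x. x \<in> rank_dom p q \<Longrightarrow> (x, x) \<in> R"
    "\<And>x y. x \<in> rank_dom p q \<Longrightarrow> y \<in> rank_dom p q \<Longrightarrow> x \<noteq> y \<Longrightarrow> (x, y) \<in> R \<or> (y, x) \<in> R"
    "\<And>j K L. j < q \<Longrightarrow> is_mindex p K \<Longrightarrow> is_mindex p L \<Longrightarrow> ((j, K), (j, madd K L)) \<in> R"
    "\<And>i J j K L. i < q \<Longrightarrow> j < q \<Longrightarrow> is_mindex p J \<Longrightarrow> is_mindex p K \<Longrightarrow> is_mindex p L \<Longrightarrow>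
        (((i, J), (j, K)) \<in> R \<longleftrightarrow> ((i, madd J L), (j, madd K L)) \<in> R)"
proof -
  have lo: "linear_order_on (rank_dom p q) R"
    and mo: "\<forall>j K L. j < q \<and> is_mindex p K \<and> is_mindex p L \<longrightarrow> ((j, K), (j, madd K L)) \<in> R"
    and co: "\<forall>i J j K L. i < q \<and> j < q \<and> is_mindex p J \<and> is_mindex p K \<and> is_mindex p L \<longrightarrow>
        (((i, J), (j, K)) \<in> R \<longleftrightarrow> ((i, madd J L), (j, madd K L)) \<in> R)"
    using assms unfolding is_ranking_def rank_dom_def by auto
  have po: "partial_order_on (rank_dom p q) R" and to: "total_on (rank_dom p q) R"
    using lo unfolding linear_order_on_def by auto
  show "R \<subseteq> rank_dom p q \<times> rank_dom p q" "trans R" "antisym R"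
    using partial_order_onD[OF po] by auto
  show "\<And>x. x \<in> rank_dom p q \<Longrightarrow> (x, x) \<in> R"
    using partial_order_onD(1)[OF po] unfolding refl_on_def by blast
  show "\<And>x y. x \<in> rank_dom p q \<Longrightarrow> y \<in> rank_dom p q \<Longrightarrow> x \<noteq> y \<Longrightarrow> (x, y) \<in> R \<or> (y, x) \<in> R"
    using to unfolding total_on_def by blast
  show "\<And>j K L. j < q \<Longrightarrow> is_mindex p K \<Longrightarrow> is_mindex p L \<Longrightarrow> ((j, K), (j, madd K L)) \<in> R"
    using mo by blast
  show "\<And>i J j K L. i < q \<Longrightarrow> j < q \<Longrightarrow> is_mindex p J \<Longrightarrow> is_mindex p K \<Longrightarrow> is_mindex p L \<Longrightarrow>
        (((i, J), (j, K)) \<in> R \<longleftrightarrow> ((i, madd J L), (j, madd K L)) \<in> R)"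
    using co by blast
qed

lemma is_mindex_madd: "is_mindex p K \<Longrightarrow> is_mindex p L \<Longrightarrow> is_mindex p (madd K L)"
  by (auto simp: is_mindex_def madd_def)

lemma strict_rank_le_trans:
  assumes rk: "is_ranking p q R" and "(x, y) \<in> strict_rank R" "(y, z) \<in> R"
  shows "(x, z) \<in> strict_rank R"
proof -
  note rD = rankingD[OF rk]
  have "(x, z) \<in> R" using assms rD(2) unfolding strict_rank_def trans_def by blast
  moreover have "x \<noteq> z"
  proof
    assume "x = z"
    then have "(y, x) \<in> R" using assms by simp
    then show False using assms rD(3) unfolding strict_rank_def antisym_def by blast
  qed
  ultimately show ?thesis unfolding strict_rank_def by blast
qed

lemma strict_rank_trans:
  "is_ranking p q R \<Longrightarrow> (x, y) \<in> strict_rank R \<Longrightarrow> (y, z) \<in> strict_rank R \<Longrightarrow> (x, z) \<in> strict_rank R"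
  using strict_rank_le_trans unfolding strict_rank_def by blast

lemma rank_dom_good_pair:
  fixes x :: "nat \<Rightarrow> nat \<times> mindex"
  assumes "\<And>i. x i \<in> rank_dom p q"
  shows "\<exists>i j. i < j \<and> fst (x i) = fst (x j) \<and> (\<forall>k. snd (x i) k \<le> snd (x j) k)"
proof -
  have dom: "fst (x i) < q \<and> is_mindex p (snd (x i))" for i
    using assms[of i] by (cases "x i") (simp add: rank_dom_def)
  then have "range (\<lambda>i. fst (x i)) \<subseteq> {..<q}" by auto
  then have "finite (range (\<lambda>i. fst (x i)))" by (rule finite_subset) simp
  then obtain i0 where "infinite {i \<in> UNIV. fst (x i) = fst (x i0)}"
    using pigeonhole_infinite[OF infinite_UNIV_nat] by blast
  from infinite_enumerate[OF this] obtain r :: "nat \<Rightarrow> nat"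
    where "strict_mono r \<and> (\<forall>m. r m \<in> {i \<in> UNIV. fst (x i) = fst (x i0)})"
    by (rule exE)
  then have r: "strict_mono r" "\<And>m. fst (x (r m)) = fst (x i0)" by auto
  obtain f where f: "strict_mono f" "\<forall>k<p. incseq (\<lambda>m. snd (x (r (f m))) k)"
    using dickson_subseq[of p "\<lambda>m. snd (x (r m))"] by blast
  have "r (f 0) < r (f 1)" using strict_monoD[OF r(1) strict_monoD[OF f(1)]] by simp
  moreover have "snd (x (r (f 0))) k \<le> snd (x (r (f 1))) k" for k
  proof (cases "k < p")
    case True then show ?thesis using f(2) by (simp add: incseq_def)
  next
    case False
    then have "snd (x (r (f 0))) k = 0"
      using dom[of "r (f 0)"] by (simp add: is_mindex_def)
    then show ?thesis by simp
  qed
  ultimately show ?thesis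
    by (intro exI[of _ "r (f 0)"] exI[of _ "r (f 1)"]) (simp add: r(2))
qed

lemma wf_strict_rank:
  assumes rk: "is_ranking p q R"
  shows "wf (strict_rank R)"
proof (rule ccontr)
  assume "\<not> wf (strict_rank R)"
  then obtain x where x: "\<And>i. (x (Suc i), x i) \<in> strict_rank R"
    unfolding wf_iff_no_infinite_down_chain by blast
  note rD = rankingD[OF rk]
  have dom: "x i \<in> rank_dom p q" for i using x[of i] rD(1) unfolding strict_rank_def by blast
  have descending: "i < j \<Longrightarrow> (x j, x i) \<in> strict_rank R" for i j
  proof (induction j)
    case (Suc j)
    show ?case
    proof (cases "i = j")
      case False
      then have "(x j, x i) \<in> strict_rank R" using Suc by simp
      with x[of j] show ?thesis by (rule strict_rank_trans[OF rk])
    qed (use x in simp)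
  qed simp
  obtain i j where ij: "i < j" "fst (x i) = fst (x j)" "\<And>k. snd (x i) k \<le> snd (x j) k"
    using rank_dom_good_pair[OF dom] by blast
  define L where "L = (\<lambda>k. snd (x j) k - snd (x i) k)"
  have dom': "fst (x k) < q \<and> is_mindex p (snd (x k))" for k
    using dom[of k] by (cases "x k") (simp add: rank_dom_def)
  then have dj: "fst (x j) < q" "is_mindex p (snd (x i))" "is_mindex p (snd (x j))" by blast+
  then have "is_mindex p L" by (auto simp: L_def is_mindex_def)
  moreover have "madd (snd (x i)) L = snd (x j)" using ij(3) by (auto simp: madd_def L_def)
  ultimately have "((fst (x j), snd (x i)), (fst (x j), snd (x j))) \<in> R"
    using rD(6)[of "fst (x j)" "snd (x i)" L] dj by simp
  then have up: "(x i, x j) \<in> R" using ij(2) by (cases "x i", cases "x j") simp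
  have down: "(x j, x i) \<in> R" "x j \<noteq> x i"
    using descending[OF ij(1)] unfolding strict_rank_def by auto
  show False using antisymD[OF rD(3) up down(1)] down(2) by simp
qed

definition coord_rank :: "((nat \<times> mindex) \<times> (nat \<times> mindex)) set \<Rightarrow> (coord \<times> coord) set" where
  "coord_rank R = {(U j K, U j' K') | j K j' K'. ((j, K), (j', K')) \<in> strict_rank R}"

fun coord_index :: "coord \<Rightarrow> nat \<times> mindex" where
  "coord_index (U j K) = (j, K)"
| "coord_index (X k) = (0, \<lambda>k. 0)"

lemma wf_coord_rank: "wf (strict_rank R) \<Longrightarrow> wf (coord_rank R)"
proof -
  assume w: "wf (strict_rank R)"
  have "coord_rank R \<subseteq> inv_image (strict_rank R) coord_index" unfolding coord_rank_def inv_image_def by auto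
  then show ?thesis using wf_subset[OF wf_inv_image[OF w]] by blast
qed

lemma mult_mset_set_replace:
  assumes "finite A" "finite A'" "x \<in> A" "x \<notin> A'" "\<And>y. y \<in> A' - A \<Longrightarrow> (y, x) \<in> r"
  shows "(mset_set A', mset_set A) \<in> mult r"
proof -
  have split: "mset_set X = mset_set (X \<inter> Y) + mset_set (X - Y)" if "finite X" for X Y :: "'a set"
  proof -
    have "mset_set ((X \<inter> Y) \<union> (X - Y)) = mset_set (X \<inter> Y) + mset_set (X - Y)"
      using that by (intro mset_set_Union) auto
    then show ?thesis by (simp add: Int_Diff_Un)
  qed
  have "x \<in> A - A'" using assms(3,4) by blast
  then have "(mset_set (A \<inter> A') + mset_set (A' - A), mset_set (A \<inter> A') + mset_set (A - A')) \<in> mult r"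
    using assms by (intro one_step_implies_mult) (auto simp: mset_set_empty_iff)
  then show ?thesis using split[OF assms(1), of A'] split[OF assms(2), of A] by (simp add: Int_commute)
qed

lemma ranking_finite_max:
  assumes rk: "is_ranking p q R" and "finite S" "S \<noteq> {}" "S \<subseteq> rank_dom p q"
  shows "\<exists>x\<in>S. \<forall>y\<in>S. (y, x) \<in> R"
  using assms(2,3,4)
proof (induction S rule: finite_ne_induct)
  case (singleton x)
  then show ?case using rankingD(4)[OF rk] by auto
next
  case (insert x S)
  then obtain m where m: "m \<in> S" "\<forall>y\<in>S. (y, m) \<in> R" by auto
  note rD = rankingD[OF rk]
  have xd: "x \<in> rank_dom p q" and md: "m \<in> rank_dom p q" using insert m by auto
  show ?case
  proof (cases "(m, x) \<in> R")
    case True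
    then have "\<forall>y\<in>insert x S. (y, x) \<in> R" using m rD(2) rD(4)[OF xd] unfolding trans_def by blast
    then show ?thesis by blast
  next
    case False
    then have "(x, m) \<in> R" using rD(5)[OF xd md] rD(4)[OF xd] by (cases "x = m") auto
    then show ?thesis using m by auto
  qed
qed

section \<open>Substitution and the rings of jet functions\<close>

lemma deps_subst: "deps (subst_coord d G F) \<subseteq> (deps F - {d}) \<union> deps G"
proof (rule deps_subsetI)
  fix z e t assume e: "e \<notin> (deps F - {d}) \<union> deps G"
  show "subst_coord d G F (z(e := t)) = subst_coord d G F z"
  proof (cases "e = d")
    case True
    then show ?thesis unfolding subst_coord_def using e by (simp add: notin_deps_upd)
  next
    case False
    then have eF: "e \<notin> deps F" and eG: "e \<notin> deps G" using e by auto
    have "F (z(e := t, d := G (z(e := t)))) = F (z(d := G z, e := t))"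
      using False notin_deps_upd[OF eG] by (simp add: fun_upd_twist)
    also have "\<dots> = F (z(d := G z))" by (rule notin_deps_upd[OF eF])
    finally show ?thesis unfolding subst_coord_def .
  qed
qed

lemma fB_fA: "F \<in> fB p q n ii JJ \<Longrightarrow> F \<in> fA p q"
  unfolding fB_def by blast

lemma fA_fin_smooth: "F \<in> fA p q \<Longrightarrow> F \<in> fin_smooth"
  unfolding fA_def fin_smooth_def by blast

lemma fB_const: "(\<lambda>z. k) \<in> fB p q n ii JJ"
  unfolding fB_def fA_def by (auto simp: deps_const smooth_const)

lemma valid_coord_shifts_within:
  assumes "c \<in> shifts_within p M D" "\<forall>d\<in>D. valid_coord p q d" "is_mindex p M"
  shows "valid_coord p q c"
proof -
  obtain d N where dN: "c = shift_mi N d" "d \<in> D" "\<forall>k. N k \<le> M k" "\<forall>k\<ge>p. N k = 0"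
    using assms(1) unfolding shifts_within_def by blast
  show ?thesis using dN assms(2) by (cases d) (auto simp: is_mindex_def madd_def)
qed

lemma fA_tdiffK: "F \<in> fA p q \<Longrightarrow> is_mindex p M \<Longrightarrow> tdiffK p M F \<in> fA p q"
proof -
  assume F: "F \<in> fA p q" and M: "is_mindex p M"
  have "tdiffK p M F \<in> fin_smooth" using fin_smooth_tdiffK fA_fin_smooth[OF F] by blast
  moreover have "\<forall>c\<in>deps (tdiffK p M F). valid_coord p q c"
    using deps_tdiffK[of p M F] valid_coord_shifts_within[OF _ _ M] F unfolding fA_def by blast
  ultimately show ?thesis unfolding fin_smooth_def fA_def by blast
qed

lemma fA_tdiff: "F \<in> fA p q \<Longrightarrow> i < p \<Longrightarrow> tdiff i F \<in> fA p q"
proof -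
  assume F: "F \<in> fA p q" and i: "i < p"
  have "is_mindex p (unit_mi i)" using i by (auto simp: is_mindex_def unit_mi_def)
  then show ?thesis using fA_tdiffK[OF F] tdiffK_unit[OF i] by metis
qed

lemma fA_plus: "F \<in> fA p q \<Longrightarrow> G \<in> fA p q \<Longrightarrow> (\<lambda>z. F z + G z) \<in> fA p q"
  unfolding fA_def using deps_plus[of F G] by (auto intro: smooth_plus finite_subset)
lemma fA_times: "F \<in> fA p q \<Longrightarrow> G \<in> fA p q \<Longrightarrow> (\<lambda>z. F z * G z) \<in> fA p q"
  unfolding fA_def using deps_times[of F G] by (auto intro: smooth_times finite_subset)
lemma fA_coord: "valid_coord p q c \<Longrightarrow> (\<lambda>z. z c) \<in> fA p q"
  unfolding fA_def using deps_coord[of c] by (auto intro: smooth_coord finite_subset)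
lemma pdiff_fB: "F \<in> fB p q n ii JJ \<Longrightarrow> pdiff c F \<in> fB p q n ii JJ"
  unfolding fB_def fA_def using deps_pdiff[of c F] smoothD(3) by (auto intro: finite_subset)

lemma finite_change_notin_deps: "finite E \<Longrightarrow> (\<forall>c. c \<notin> E \<longrightarrow> w c = z c) \<Longrightarrow> E \<inter> deps F = {} \<Longrightarrow> F w = F z"
proof (induction E arbitrary: w rule: finite_induct)
  case empty
  then have "w = z" by auto
  then show ?case by simp
next
  case (insert e E)
  have p1: "\<forall>c. c \<notin> E \<longrightarrow> (w(e := z e)) c = z c" using insert.prems(1) by auto
  have p2: "E \<inter> deps F = {}" using insert.prems(2) by auto
  have "F (w(e := z e)) = F z" by (rule insert.IH[OF p1 p2])
  moreover have "e \<notin> deps F" using insert.prems(2) by auto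
  then have "F (w(e := z e)) = F w" using notin_deps_upd[of e F w "z e"] by simp
  ultimately show ?case by simp
qed

text \<open>A jet has infinitely many coordinates, so finiteness of \<open>deps F\<close> alone only controls
  finitely many changes of \<open>z\<close>; continuity in the product topology closes the gap.\<close>

lemma continuous_deps_agree:
  assumes cont: "continuous_on UNIV F" and fin: "finite (deps F)" and ag: "\<forall>c\<in>deps F. z c = z' c"
  shows "F z = F z'"
proof (rule ccontr)
  assume ne: "F z \<noteq> F z'"
  define \<epsilon> where "\<epsilon> = dist (F z) (F z')"
  have ep: "\<epsilon> > 0" using ne unfolding \<epsilon>_def by simp
  have ov: "\<forall>B. open B \<longrightarrow> open (F -` B \<inter> UNIV)"
    by (rule continuous_on_open_vimage[OF open_UNIV, THEN iffD1, OF cont])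
  have "open (F -` ball (F z') \<epsilon> \<inter> UNIV)" by (rule ov[rule_format, OF open_ball])
  then have op: "openin (product_topology (\<lambda>i. euclidean) UNIV) (F -` ball (F z') \<epsilon>)"
    unfolding open_fun_def by simp
  have zin: "z' \<in> F -` ball (F z') \<epsilon>" using ep by simp
  obtain X where X: "z' \<in> Pi\<^sub>E UNIV X" "\<forall>i. openin euclidean (X i)"
      "finite {i. X i \<noteq> topspace euclidean}" "Pi\<^sub>E UNIV X \<subseteq> F -` ball (F z') \<epsilon>"
    using product_topology_open_contains_basis[OF op zin] by auto
  define E where "E = {i. X i \<noteq> UNIV}"
  have fE: "finite E" using X(3) unfolding E_def by simp
  define w where "w = (\<lambda>c. if c \<in> E then z' c else z c)"
  have "w \<in> Pi\<^sub>E UNIV X"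
    unfolding PiE_UNIV_domain
  proof
    fix c
    show "w c \<in> X c"
    proof (cases "c \<in> E")
      case True then show ?thesis using X(1) unfolding w_def PiE_UNIV_domain by auto
    next
      case False then show ?thesis unfolding E_def by auto
    qed
  qed
  then have "dist (F w) (F z') < \<epsilon>" using X(4) by (auto simp: dist_commute)
  moreover have "F w = F z"
  proof -
    have a1: "finite {c\<in>E. z' c \<noteq> z c}" using fE by simp
    have a2: "\<forall>c. c \<notin> {c\<in>E. z' c \<noteq> z c} \<longrightarrow> w c = z c" unfolding w_def by auto
    have a3: "{c\<in>E. z' c \<noteq> z c} \<inter> deps F = {}" using ag by auto
    show ?thesis by (rule finite_change_notin_deps[OF a1 a2 a3])
  qed
  ultimately show False unfolding \<epsilon>_def by simp
qed

lemma fA_deps_agree: "F \<in> fA p q \<Longrightarrow> \<forall>c\<in>deps F. z c = z' c \<Longrightarrow> F z = F z'"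
  unfolding fA_def using continuous_deps_agree smoothD(1) by blast

text \<open>Unlike \<open>B\<close>, this
  ring is closed under total derivatives and under substituting a principal coordinate, so it
  contains every stage of the reduction.\<close>

inductive_set B_poly :: "nat \<Rightarrow> nat \<Rightarrow> nat \<Rightarrow> (nat \<Rightarrow> nat) \<Rightarrow> (nat \<Rightarrow> mindex) \<Rightarrow> jfun set"
  for p q n ii JJ where
  base: "F \<in> fB p q n ii JJ \<Longrightarrow> F \<in> B_poly p q n ii JJ"
| coord: "valid_coord p q c \<Longrightarrow> is_U c \<Longrightarrow> (\<lambda>z. z c) \<in> B_poly p q n ii JJ"
| plus: "F \<in> B_poly p q n ii JJ \<Longrightarrow> G \<in> B_poly p q n ii JJ \<Longrightarrow> (\<lambda>z. F z + G z) \<in> B_poly p q n ii JJ"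
| times: "F \<in> B_poly p q n ii JJ \<Longrightarrow> G \<in> B_poly p q n ii JJ \<Longrightarrow> (\<lambda>z. F z * G z) \<in> B_poly p q n ii JJ"

lemma B_poly_fA: "F \<in> B_poly p q n ii JJ \<Longrightarrow> F \<in> fA p q"
  by (induction rule: B_poly.induct) (auto intro: fB_fA fA_coord fA_plus fA_times)

lemma B_poly_const: "(\<lambda>z. k) \<in> B_poly p q n ii JJ"
  by (rule B_poly.base, rule fB_const)

lemma B_poly_sum: "finite S \<Longrightarrow> (\<And>s. s \<in> S \<Longrightarrow> f s \<in> B_poly p q n ii JJ) \<Longrightarrow> (\<lambda>z. \<Sum>s\<in>S. f s z) \<in> B_poly p q n ii JJ"
  by (induction S rule: finite_induct) (auto intro: B_poly_const B_poly.plus)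

lemma B_poly_tdiff: "F \<in> B_poly p q n ii JJ \<Longrightarrow> i < p \<Longrightarrow> tdiff i F \<in> B_poly p q n ii JJ"
proof (induction rule: B_poly.induct)
  case (base F)
  then have fd: "finite (deps F)" and vd: "\<forall>c\<in>deps F. valid_coord p q c"
    unfolding fB_def fA_def by auto
  have cs: "(\<lambda>z. z (shift i c)) \<in> B_poly p q n ii JJ" if c: "c \<in> {c \<in> deps F. is_U c}" for c
  proof -
    obtain j K where cj: "c = U j K" using c by (cases c) auto
    then have "j < q" "is_mindex p K" using vd c by auto
    then have "valid_coord p q (shift i c)" using cj base.prems by (auto simp: is_mindex_def madd_def unit_mi_def)
    then show "(\<lambda>z. z (shift i c)) \<in> B_poly p q n ii JJ" using cj by (intro B_poly.coord) auto
  qed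
  have "(\<lambda>z. \<Sum>c\<in>{c\<in>deps F. is_U c}. (\<lambda>z. z (shift i c)) z * pdiff c F z) \<in> B_poly p q n ii JJ"
  proof (rule B_poly_sum)
    show "finite {c \<in> deps F. is_U c}" using fd by auto
    fix c assume "c \<in> {c \<in> deps F. is_U c}"
    then show "(\<lambda>z. (\<lambda>z. z (shift i c)) z * pdiff c F z) \<in> B_poly p q n ii JJ"
      by (rule B_poly.times[OF cs B_poly.base[OF pdiff_fB[OF base(1)]]])
  qed
  then have "(\<lambda>z. pdiff (X i) F z + (\<lambda>z. \<Sum>c\<in>{c\<in>deps F. is_U c}. (\<lambda>z. z (shift i c)) z * pdiff c F z) z) \<in> B_poly p q n ii JJ"
    by (rule B_poly.plus[OF B_poly.base[OF pdiff_fB[OF base(1)]]])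
  then show ?case unfolding tdiff_def by simp
next
  case (coord c)
  then obtain j K where cj: "c = U j K" by (cases c) auto
  then have "valid_coord p q (shift i c)" using coord by (auto simp: is_mindex_def madd_def unit_mi_def)
  then show ?case using tdiff_coordU[OF coord(2)] cj by (auto intro: B_poly.coord)
next
  case (plus F G)
  then show ?case using tdiff_plus[OF fA_fin_smooth[OF B_poly_fA] fA_fin_smooth[OF B_poly_fA], of F p q n ii JJ G]
    by (auto intro: B_poly.plus)
next
  case (times F G)
  then show ?case using tdiff_times[OF fA_fin_smooth[OF B_poly_fA] fA_fin_smooth[OF B_poly_fA], of F p q n ii JJ G]
    by (auto intro: B_poly.plus B_poly.times)
qed

lemma B_poly_funpow: "F \<in> B_poly p q n ii JJ \<Longrightarrow> i < p \<Longrightarrow> (tdiff i ^^ m) F \<in> B_poly p q n ii JJ"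
  by (induction m) (auto intro: B_poly_tdiff)

lemma B_poly_tdiffK_le: "F \<in> B_poly p q n ii JJ \<Longrightarrow> p' \<le> p \<Longrightarrow> tdiffK p' M F \<in> B_poly p q n ii JJ"
proof (induction p' arbitrary: F)
  case 0 then show ?case by simp
next
  case (Suc p')
  then show ?case unfolding tdiffK_Suc by (intro Suc.IH B_poly_funpow) auto
qed

lemma B_poly_tdiffK: "F \<in> B_poly p q n ii JJ \<Longrightarrow> tdiffK p M F \<in> B_poly p q n ii JJ"
  using B_poly_tdiffK_le by blast

lemma B_poly_subst_coord:
  assumes "F \<in> B_poly p q n ii JJ" "G \<in> B_poly p q n ii JJ" "principal n ii JJ j K"
  shows "subst_coord (U j K) G F \<in> B_poly p q n ii JJ"
  using assms(1)
proof (induction rule: B_poly.induct)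
  case (base F)
  have "U j K \<notin> deps F" using base assms(3) unfolding fB_def by force
  then have "subst_coord (U j K) G F = F" unfolding subst_coord_def by (simp add: notin_deps_upd)
  with base show ?case by (simp add: B_poly.base)
next
  case (coord c)
  then show ?case using assms(2) by (cases "c = U j K") (auto simp: subst_coord_def intro: B_poly.coord)
next
  case (plus F1 F2)
  then show ?case using B_poly.plus[OF plus.IH] by (simp add: subst_coord_def)
next
  case (times F1 F2)
  then show ?case using B_poly.times[OF times.IH] by (simp add: subst_coord_def)
qed

lemma B_poly_subst_coord_factor:
  assumes "F \<in> B_poly p q n ii JJ" "G \<in> B_poly p q n ii JJ" "principal n ii JJ j K"
  shows "\<exists>H\<in>B_poly p q n ii JJ. \<forall>z. F z - subst_coord (U j K) G F z = (z (U j K) - G z) * H z"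
  using assms(1)
proof (induction rule: B_poly.induct)
  case (base F)
  have "U j K \<notin> deps F" using base assms(3) unfolding fB_def by force
  then have "subst_coord (U j K) G F = F" unfolding subst_coord_def by (simp add: notin_deps_upd)
  then show ?case by (intro bexI[of _ "\<lambda>_. 0"] B_poly_const) simp
next
  case (coord c)
  have "\<forall>z. z c - subst_coord (U j K) G (\<lambda>z. z c) z = (z (U j K) - G z) * (if c = U j K then 1 else 0)"
    unfolding subst_coord_def by simp
  then show ?case by (intro bexI[of _ "\<lambda>_. if c = U j K then 1 else 0"] B_poly_const) simp
next
  case (plus F1 F2)
  then obtain H1 H2 where H: "H1 \<in> B_poly p q n ii JJ" "H2 \<in> B_poly p q n ii JJ"
    "\<forall>z. F1 z - subst_coord (U j K) G F1 z = (z (U j K) - G z) * H1 z"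
    "\<forall>z. F2 z - subst_coord (U j K) G F2 z = (z (U j K) - G z) * H2 z" by blast
  have "F1 z + F2 z - subst_coord (U j K) G (\<lambda>z. F1 z + F2 z) z = (z (U j K) - G z) * (H1 z + H2 z)" for z
    using H(3)[rule_format, of z] H(4)[rule_format, of z] by (simp add: subst_coord_def algebra_simps)
  then show ?case using H(1,2) by (intro bexI[of _ "\<lambda>z. H1 z + H2 z"] B_poly.plus) auto
next
  case (times F1 F2)
  then obtain H1 H2 where H: "H1 \<in> B_poly p q n ii JJ" "H2 \<in> B_poly p q n ii JJ"
    "\<forall>z. F1 z - subst_coord (U j K) G F1 z = (z (U j K) - G z) * H1 z"
    "\<forall>z. F2 z - subst_coord (U j K) G F2 z = (z (U j K) - G z) * H2 z" by blast
  define S1 where "S1 = subst_coord (U j K) G F1"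
  have "S1 \<in> B_poly p q n ii JJ" unfolding S1_def using times.hyps(1) assms(2,3) by (rule B_poly_subst_coord)
  have "F1 z * F2 z - subst_coord (U j K) G (\<lambda>z. F1 z * F2 z) z
      = (z (U j K) - G z) * (H1 z * F2 z + S1 z * H2 z)" for z
  proof -
    have "F1 z * F2 z - subst_coord (U j K) G (\<lambda>z. F1 z * F2 z) z
        = (F1 z - S1 z) * F2 z + S1 z * (F2 z - subst_coord (U j K) G F2 z)"
      unfolding S1_def subst_coord_def by (simp add: algebra_simps)
    also have "\<dots> = (z (U j K) - G z) * H1 z * F2 z + S1 z * ((z (U j K) - G z) * H2 z)"
      using H(3)[rule_format, of z] H(4)[rule_format, of z] unfolding S1_def by simp
    finally show ?thesis by (simp add: algebra_simps)
  qed
  then show ?case using H(1,2) \<open>S1 \<in> _\<close> times.hyps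
    by (intro bexI[of _ "\<lambda>z. H1 z * F2 z + S1 z * H2 z"] B_poly.plus B_poly.times) auto
qed

definition principal_deps :: "nat \<Rightarrow> (nat \<Rightarrow> nat) \<Rightarrow> (nat \<Rightarrow> mindex) \<Rightarrow> jfun \<Rightarrow> (nat \<times> mindex) set" where
  "principal_deps n ii JJ F = {(j, K). U j K \<in> deps F \<and> principal n ii JJ j K}"

lemma finite_principal_deps: "finite (deps F) \<Longrightarrow> finite (principal_deps n ii JJ F)"
proof -
  assume f: "finite (deps F)"
  have "principal_deps n ii JJ F \<subseteq> (\<lambda>c. case c of U j K \<Rightarrow> (j, K) | X k \<Rightarrow> (0, \<lambda>k. 0)) ` deps F"
    unfolding principal_deps_def by force
  then show ?thesis using f finite_subset by blast
qed

section \<open>Reduction modulo the differential ideal\<close>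

locale passive_system =
  fixes p q n :: nat and ii :: "nat \<Rightarrow> nat" and JJ :: "nat \<Rightarrow> mindex"
    and R :: "((nat \<times> mindex) \<times> (nat \<times> mindex)) set" and PP :: "nat \<Rightarrow> jfun"
  assumes po: "passive_orthonomic p q n ii JJ R PP"
begin

abbreviation "B \<equiv> fB p q n ii JJ"
abbreviation "I \<equiv> diff_ideal p q n ii JJ PP"
abbreviation "Bpoly \<equiv> B_poly p q n ii JJ"
abbreviation "\<Delta> \<equiv> Delta ii JJ PP"

lemma ranking: "is_ranking p q R"
  using po unfolding passive_orthonomic_def by blast

lemma system_index: "a < n \<Longrightarrow> ii a < q" "a < n \<Longrightarrow> is_mindex p (JJ a)"
  using po unfolding passive_orthonomic_def by simp_all

lemma PP_fB: "a < n \<Longrightarrow> PP a \<in> B"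
  using po unfolding passive_orthonomic_def by simp

lemma PP_deps_below: "a < n \<Longrightarrow> U j K \<in> deps (PP a) \<Longrightarrow> ((j, K), (ii a, JJ a)) \<in> strict_rank R"
proof -
  assume "a < n" "U j K \<in> deps (PP a)"
  with po have "((j, K), (ii a, JJ a)) \<in> R \<and> (j, K) \<noteq> (ii a, JJ a)"
    unfolding passive_orthonomic_def by fastforce
  then show ?thesis unfolding strict_rank_def by simp
qed

lemma passivity:
  "a < n \<Longrightarrow> b < n \<Longrightarrow> is_mindex p K \<Longrightarrow> is_mindex p L \<Longrightarrow> ii a = ii b \<Longrightarrow>
   madd (JJ a) K = madd (JJ b) L \<Longrightarrow> reduces_to p q n ii JJ R PP (tdiffK p K (PP a)) G1 \<Longrightarrow>
   reduces_to p q n ii JJ R PP (tdiffK p L (PP b)) G2 \<Longrightarrow> G1 = G2"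
  using po unfolding passive_orthonomic_def by (elim conjE allE impE) auto

lemma Delta_fin_smooth: "a < n \<Longrightarrow> \<Delta> a \<in> fin_smooth"
  unfolding Delta_def using fA_fin_smooth[OF fB_fA[OF PP_fB]] by (intro fin_smooth_minus fin_smooth_coord) auto

lemma tdiffK_Delta: assumes "a < n" "is_mindex p M"
  shows "tdiffK p M (\<Delta> a) = (\<lambda>z. z (U (ii a) (madd (JJ a) M)) - tdiffK p M (PP a) z)"
proof -
  have "tdiffK p M (\<Delta> a) = (\<lambda>z. tdiffK p M (\<lambda>z. z (U (ii a) (JJ a))) z - tdiffK p M (PP a) z)"
    unfolding Delta_def using fA_fin_smooth[OF fB_fA[OF PP_fB[OF assms(1)]]] by (intro tdiffK_minus fin_smooth_coord) auto
  moreover have "(\<lambda>k. if k < p then M k else 0) = M" using assms(2) by (auto simp: is_mindex_def)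
  ultimately show ?thesis by (simp add: tdiffK_coord)
qed

lemma diff_ideal_fin_smooth: "G \<in> I \<Longrightarrow> G \<in> fin_smooth"
proof (induction rule: diff_ideal.induct)
  case zero then show ?case by (rule fin_smooth_const)
next
  case (add G c a L)
  then show ?case by (intro fin_smooth_plus fin_smooth_times fin_smooth_tdiffK Delta_fin_smooth) (auto intro: fA_fin_smooth)
qed

lemma diff_ideal_add: "G2 \<in> I \<Longrightarrow> G1 \<in> I \<Longrightarrow> (\<lambda>z. G1 z + G2 z) \<in> I"
proof (induction rule: diff_ideal.induct)
  case zero then show ?case by simp
next
  case (add G c a L)
  have "(\<lambda>z. (\<lambda>z. G1 z + G z) z + c z * tdiffK p L (\<Delta> a) z) \<in> I"
    using add by (intro diff_ideal.add) auto
  then show ?case by (simp add: add.assoc)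
qed

lemma diff_ideal_gen: "c \<in> fA p q \<Longrightarrow> a < n \<Longrightarrow> is_mindex p L \<Longrightarrow> (\<lambda>z. c z * tdiffK p L (\<Delta> a) z) \<in> I"
proof -
  assume "c \<in> fA p q" "a < n" "is_mindex p L"
  then have "(\<lambda>z. (\<lambda>z. 0) z + c z * tdiffK p L (\<Delta> a) z) \<in> I" by (intro diff_ideal.intros)
  then show ?thesis by simp
qed

lemma diff_ideal_tdiff: "G \<in> I \<Longrightarrow> i < p \<Longrightarrow> tdiff i G \<in> I"
proof (induction rule: diff_ideal.induct)
  case zero
  then show ?case using tdiff_const[of i 0] diff_ideal.zero by simp
next
  case (add G c a L)
  have a: "a < n" and iP: "i < p" and cA: "c \<in> fA p q" and mL0: "is_mindex p L"
    and IH: "tdiff i G \<in> I" using add by auto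
  have GS: "G \<in> fin_smooth" using add diff_ideal_fin_smooth by blast
  have cS: "c \<in> fin_smooth" using add fA_fin_smooth by blast
  have TS: "tdiffK p L (\<Delta> a) \<in> fin_smooth" using add by (intro fin_smooth_tdiffK Delta_fin_smooth)
  have mL: "is_mindex p (madd L (unit_mi i))" using add by (auto simp: is_mindex_def madd_def unit_mi_def)
  have "tdiff i (\<lambda>z. G z + c z * tdiffK p L (\<Delta> a) z) =
     (\<lambda>z. tdiff i G z + (tdiff i c z * tdiffK p L (\<Delta> a) z + c z * tdiff i (tdiffK p L (\<Delta> a)) z))"
    using tdiff_plus[OF GS fin_smooth_times[OF cS TS]] tdiff_times[OF cS TS] by simp
  also have "\<dots> = (\<lambda>z. (\<lambda>z. tdiff i G z + tdiff i c z * tdiffK p L (\<Delta> a) z) z + c z * tdiffK p (madd L (unit_mi i)) (\<Delta> a) z)"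
    using tdiff_tdiffK[OF Delta_fin_smooth[OF a] iP] by (simp add: add.assoc)
  also have "\<dots> \<in> I"
    using IH cA iP a mL mL0 by (intro diff_ideal.add fA_tdiff)
  finally show ?case .
qed

lemma diff_ideal_funpow: "G \<in> I \<Longrightarrow> i < p \<Longrightarrow> (tdiff i ^^ m) G \<in> I"
  by (induction m) (auto intro: diff_ideal_tdiff)

lemma diff_ideal_tdiffK_le: "G \<in> I \<Longrightarrow> p' \<le> p \<Longrightarrow> tdiffK p' M G \<in> I"
proof (induction p' arbitrary: G)
  case 0 then show ?case by simp
next
  case (Suc p')
  then show ?case unfolding tdiffK_Suc by (intro Suc.IH diff_ideal_funpow) auto
qed

lemma diff_ideal_tdiffK: "G \<in> I \<Longrightarrow> tdiffK p M G \<in> I"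
  using diff_ideal_tdiffK_le by blast

lemma deps_tdiffK_PP_below:
  assumes a: "a < n" and M: "is_mindex p M" and jK: "U j K \<in> deps (tdiffK p M (PP a))"
  shows "((j, K), (ii a, madd (JJ a) M)) \<in> strict_rank R"
proof -
  note rD = rankingD[OF ranking]
  obtain c N where cN: "U j K = shift_mi N c" "c \<in> deps (PP a)" "\<forall>k. N k \<le> M k" "\<forall>k\<ge>p. N k = 0"
    using deps_tdiffK[of p M "PP a"] jK unfolding shifts_within_def by blast
  obtain K0 where c: "c = U j K0" and K: "K = madd K0 N" using cN(1) by (cases c) auto
  have cs: "((j, K0), (ii a, JJ a)) \<in> strict_rank R" using PP_deps_below[OF a] cN(2) c by simp
  have vc: "j < q" "is_mindex p K0" using PP_fB[OF a] cN(2) c unfolding fB_def fA_def by auto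
  have mN: "is_mindex p N" using cN(4) by (auto simp: is_mindex_def)
  have s1: "((j, madd K0 N), (ii a, madd (JJ a) N)) \<in> R"
    using rD(7)[OF vc(1) system_index(1)[OF a] vc(2) system_index(2)[OF a] mN] cs unfolding strict_rank_def by blast
  have "(j, madd K0 N) \<noteq> (ii a, madd (JJ a) N)"
  proof
    assume "(j, madd K0 N) = (ii a, madd (JJ a) N)"
    then have "j = ii a" "K0 = JJ a" unfolding madd_def by (auto dest: fun_cong intro!: ext)
    then show False using cs unfolding strict_rank_def by auto
  qed
  then have s2: "((j, K), (ii a, madd (JJ a) N)) \<in> strict_rank R" using s1 K unfolding strict_rank_def by auto
  define L' where "L' = (\<lambda>k. M k - N k)"
  have mL': "is_mindex p L'" using M by (auto simp: L'_def is_mindex_def)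
  have "madd (madd (JJ a) N) L' = madd (JJ a) M" using cN(3) by (auto simp: madd_def L'_def)
  moreover have "((ii a, madd (JJ a) N), (ii a, madd (madd (JJ a) N) L')) \<in> R"
    using rD(6)[OF system_index(1)[OF a] is_mindex_madd[OF system_index(2)[OF a] mN] mL'] .
  ultimately have "((ii a, madd (JJ a) N), (ii a, madd (JJ a) M)) \<in> R" by simp
  then show ?thesis using strict_rank_le_trans[OF ranking s2] by blast
qed

lemma principal_deps_rank_dom: "F \<in> fA p q \<Longrightarrow> principal_deps n ii JJ F \<subseteq> rank_dom p q"
  unfolding principal_deps_def fA_def rank_dom_def by force

lemma reduction_step:
  assumes F: "F \<in> Bpoly" and top: "(j, K) \<in> principal_deps n ii JJ F"
    "\<forall>y\<in>principal_deps n ii JJ F. (y, (j, K)) \<in> R"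
  obtains F' where "red_step p n ii JJ R PP F F'" "F' \<in> Bpoly" "(\<lambda>z. F z - F' z) \<in> I"
    "(mset_set (principal_deps n ii JJ F'), mset_set (principal_deps n ii JJ F)) \<in> mult (strict_rank R)"
proof -
  have FA: "F \<in> fA p q" using F B_poly_fA by blast
  have ujK: "U j K \<in> deps F" and pr: "principal n ii JJ j K" using top(1) unfolding principal_deps_def by auto
  have mK: "is_mindex p K" using FA ujK unfolding fA_def by force
  obtain a L where aL: "a < n" "j = ii a" "K = madd (JJ a) L" using pr unfolding principal_def by blast
  have mL: "is_mindex p L" using mK aL(3) by (auto simp: is_mindex_def madd_def)
  define G where "G = tdiffK p L (PP a)"
  have GC: "G \<in> Bpoly" unfolding G_def using PP_fB[OF aL(1)] by (intro B_poly_tdiffK B_poly.base)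
  define F' where "F' = subst_coord (U j K) G F"
  have F'C: "F' \<in> Bpoly" unfolding F'_def using F GC pr by (rule B_poly_subst_coord)
  obtain H where HC: "H \<in> Bpoly" and H: "\<forall>z. F z - F' z = (z (U j K) - G z) * H z"
    using B_poly_subst_coord_factor[OF F GC pr] unfolding F'_def by blast
  have step: "red_step p n ii JJ R PP F F'"
    unfolding red_step_def F'_def G_def using ujK pr top aL unfolding principal_deps_def by blast
  have "(\<lambda>z. H z * tdiffK p L (\<Delta> a) z) \<in> I" using HC B_poly_fA aL(1) mL by (intro diff_ideal_gen) auto
  moreover have "(\<lambda>z. H z * tdiffK p L (\<Delta> a) z) = (\<lambda>z. F z - F' z)"
    using H tdiffK_Delta[OF aL(1) mL] aL unfolding G_def by (auto simp: mult.commute)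
  ultimately have ideal: "(\<lambda>z. F z - F' z) \<in> I" by simp
  have below: "((j', K'), (j, K)) \<in> strict_rank R" if "U j' K' \<in> deps G" for j' K'
    using deps_tdiffK_PP_below[OF aL(1) mL] that aL unfolding G_def by simp
  have dF': "deps F' \<subseteq> (deps F - {U j K}) \<union> deps G" unfolding F'_def by (rule deps_subst)
  have "(mset_set (principal_deps n ii JJ F'), mset_set (principal_deps n ii JJ F)) \<in> mult (strict_rank R)"
  proof (rule mult_mset_set_replace[OF _ _ top(1)])
    show "finite (principal_deps n ii JJ F)" "finite (principal_deps n ii JJ F')"
      using FA F'C B_poly_fA finite_principal_deps unfolding fA_def by blast+
    show "(j, K) \<notin> principal_deps n ii JJ F'"
      using dF' below[of j K] unfolding principal_deps_def strict_rank_def by auto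
    show "(y, (j, K)) \<in> strict_rank R" if "y \<in> principal_deps n ii JJ F' - principal_deps n ii JJ F" for y
      using that dF' below unfolding principal_deps_def by auto
  qed
  then show ?thesis using that step F'C ideal by blast
qed

lemma reduction_exists:
  assumes "F \<in> Bpoly"
  shows "\<exists>G. (red_step p n ii JJ R PP)\<^sup>*\<^sup>* F G \<and> G \<in> B \<and> (\<lambda>z. F z - G z) \<in> I"
  using assms
proof (induction "mset_set (principal_deps n ii JJ F)" arbitrary: F
    rule: wf_induct_rule[OF wf_mult[OF wf_strict_rank[OF ranking]]])
  case (1 F)
  have FA: "F \<in> fA p q" using 1 B_poly_fA by blast
  show ?case
  proof (cases "principal_deps n ii JJ F = {}")
    case True
    have "F \<in> B" using FA True unfolding fB_def principal_deps_def by (auto split: coord.splits)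
    moreover have "(\<lambda>z. F z - F z) \<in> I" using diff_ideal.zero by simp
    ultimately show ?thesis by blast
  next
    case False
    have "finite (principal_deps n ii JJ F)" using FA finite_principal_deps unfolding fA_def by blast
    then obtain x where "x \<in> principal_deps n ii JJ F" "\<forall>y\<in>principal_deps n ii JJ F. (y, x) \<in> R"
      using ranking_finite_max[OF ranking _ False principal_deps_rank_dom[OF FA]] by blast
    then obtain F' where F': "red_step p n ii JJ R PP F F'" "F' \<in> Bpoly" "(\<lambda>z. F z - F' z) \<in> I"
      "(mset_set (principal_deps n ii JJ F'), mset_set (principal_deps n ii JJ F)) \<in> mult (strict_rank R)"
      using reduction_step[OF 1(2)] by (cases x) blast
    then obtain G where G: "(red_step p n ii JJ R PP)\<^sup>*\<^sup>* F' G" "G \<in> B" "(\<lambda>z. F' z - G z) \<in> I"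
      using 1(1) by blast
    have "(\<lambda>z. (\<lambda>z. F z - F' z) z + (\<lambda>z. F' z - G z) z) \<in> I" using F'(3) G(3) by (rule diff_ideal_add[rotated])
    then have "(\<lambda>z. F z - G z) \<in> I" by simp
    moreover have "(red_step p n ii JJ R PP)\<^sup>*\<^sup>* F G" using F'(1) G(1) by (rule converse_rtranclp_into_rtranclp)
    ultimately show ?thesis using G(2) by blast
  qed
qed

section \<open>Formal solutions and uniqueness of reduced forms\<close>

definition principal_choice :: "nat \<Rightarrow> mindex \<Rightarrow> nat \<times> mindex" where
  "principal_choice j K = (SOME aL. fst aL < n \<and> j = ii (fst aL) \<and> K = madd (JJ (fst aL)) (snd aL))"

lemma principal_choiceD:
  assumes "principal n ii JJ j K" "is_mindex p K"
  shows "fst (principal_choice j K) < n" "j = ii (fst (principal_choice j K))" "K = madd (JJ (fst (principal_choice j K))) (snd (principal_choice j K))"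
    "is_mindex p (snd (principal_choice j K))"
proof -
  have "\<exists>aL. fst aL < n \<and> j = ii (fst aL) \<and> K = madd (JJ (fst aL)) (snd aL)"
    using assms(1) unfolding principal_def by auto
  then have s: "fst (principal_choice j K) < n \<and> j = ii (fst (principal_choice j K)) \<and> K = madd (JJ (fst (principal_choice j K))) (snd (principal_choice j K))"
    unfolding principal_choice_def by (rule someI_ex)
  then show "fst (principal_choice j K) < n" "j = ii (fst (principal_choice j K))" "K = madd (JJ (fst (principal_choice j K))) (snd (principal_choice j K))" by auto
  show "is_mindex p (snd (principal_choice j K))" unfolding is_mindex_def
  proof (intro allI impI)
    fix k assume "p \<le> k"
    then have "K k = 0" using assms(2) unfolding is_mindex_def by blast
    moreover have "K k = JJ (fst (principal_choice j K)) k + snd (principal_choice j K) k" using s unfolding madd_def by metis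
    ultimately show "snd (principal_choice j K) k = 0" by simp
  qed
qed

text \<open>The formal solution with parametric data \<open>z0\<close>: a principal coordinate \<open>u^j_K\<close> is given
  the value of \<open>D_L P^a\<close> for some representation \<open>(j, K) = (ii a, JJ a + L)\<close>, which only
  involves coordinates of lower rank.\<close>

definition solution_step :: "jet \<Rightarrow> (coord \<Rightarrow> real) \<Rightarrow> coord \<Rightarrow> real" where
  "solution_step z0 f c = (case c of
     U j K \<Rightarrow> (if principal n ii JJ j K \<and> (j, K) \<in> rank_dom p q
               then tdiffK p (snd (principal_choice j K)) (PP (fst (principal_choice j K))) (\<lambda>d. if (d, c) \<in> coord_rank R then f d else z0 d)
               else z0 c)
   | X k \<Rightarrow> z0 c)"

definition formal_solution :: "jet \<Rightarrow> jet" where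
  "formal_solution z0 = wfrec (coord_rank R) (solution_step z0)"

lemma formal_solution_eq: "formal_solution z0 c = solution_step z0 (cut (formal_solution z0) (coord_rank R) c) c"
  unfolding formal_solution_def by (rule wfrec[OF wf_coord_rank[OF wf_strict_rank[OF ranking]]])

lemma formal_solution_X: "formal_solution z0 (X k) = z0 (X k)"
  using formal_solution_eq[of z0 "X k"] unfolding solution_step_def by simp

lemma formal_solution_parametric:
  assumes "\<not> (principal n ii JJ j K \<and> (j, K) \<in> rank_dom p q)" shows "formal_solution z0 (U j K) = z0 (U j K)"
  using formal_solution_eq[of z0 "U j K"] unfolding solution_step_def coord.case if_not_P[OF assms] .

lemma formal_solution_principal:
  assumes "principal n ii JJ j K" "(j, K) \<in> rank_dom p q"
  shows "formal_solution z0 (U j K) = tdiffK p (snd (principal_choice j K)) (PP (fst (principal_choice j K))) (formal_solution z0)"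
proof -
  define a where "a = fst (principal_choice j K)"
  define L where "L = snd (principal_choice j K)"
  have mK: "is_mindex p K" using assms(2) by (auto simp: rank_dom_def)
  note s = principal_choiceD[OF assms(1) mK, folded a_def L_def]
  define w where "w = (\<lambda>d. if (d, U j K) \<in> coord_rank R then cut (formal_solution z0) (coord_rank R) (U j K) d else z0 d)"
  have "formal_solution z0 (U j K) = tdiffK p L (PP a) w"
    using formal_solution_eq[of z0 "U j K"] assms unfolding solution_step_def w_def a_def L_def by simp
  also have "\<dots> = tdiffK p L (PP a) (formal_solution z0)"
  proof (rule fA_deps_agree[of "tdiffK p L (PP a)" p q w "formal_solution z0"])
    show "tdiffK p L (PP a) \<in> fA p q" using PP_fB[OF s(1)] s(4) by (intro fA_tdiffK fB_fA)
    show "\<forall>c\<in>deps (tdiffK p L (PP a)). w c = formal_solution z0 c"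
    proof
      fix c assume c: "c \<in> deps (tdiffK p L (PP a))"
      show "w c = formal_solution z0 c"
      proof (cases c)
        case (X k)
        then show ?thesis unfolding w_def coord_rank_def by (simp add: formal_solution_X)
      next
        case (U j' K')
        then have "((j', K'), (ii a, madd (JJ a) L)) \<in> strict_rank R" using deps_tdiffK_PP_below[OF s(1) s(4)] c by simp
        then have "(c, U j K) \<in> coord_rank R" using U s unfolding coord_rank_def by auto
        then show ?thesis unfolding w_def by (simp add: cut_apply)
      qed
    qed
  qed
  finally show ?thesis unfolding a_def L_def .
qed

definition rank_below :: "nat \<times> mindex \<Rightarrow> jfun \<Rightarrow> bool" where
  "rank_below x F \<longleftrightarrow> (\<forall>j K. U j K \<in> deps F \<longrightarrow> ((j, K), x) \<in> strict_rank R)"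

lemma rank_below_tdiffK_PP: "a < n \<Longrightarrow> is_mindex p M \<Longrightarrow> rank_below (ii a, madd (JJ a) M) (tdiffK p M (PP a))"
  unfolding rank_below_def using deps_tdiffK_PP_below by blast

lemma reduction_value_at_solution:
  assumes ch: "(red_step p n ii JJ R PP)\<^sup>*\<^sup>* F G"
    and bl: "rank_below x F"
    and IH: "\<And>b M. ((ii b, madd (JJ b) M), x) \<in> strict_rank R \<Longrightarrow> b < n \<Longrightarrow> is_mindex p M \<Longrightarrow>
               formal_solution z0 (U (ii b) (madd (JJ b) M)) = tdiffK p M (PP b) (formal_solution z0)"
  shows "F (formal_solution z0) = G (formal_solution z0)"
  using ch bl
proof (induction rule: converse_rtranclp_induct)
  case base then show ?case by simp
next
  case (step y z)
  obtain j K a L where st: "U j K \<in> deps y" "principal n ii JJ j K" "a < n" "j = ii a" "K = madd (JJ a) L"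
     "z = subst_coord (U j K) (tdiffK p L (PP a)) y"
    using step(1) unfolding red_step_def by blast
  have jKx: "((j, K), x) \<in> strict_rank R" using step(4) st(1) unfolding rank_below_def by blast
  then have "(j, K) \<in> rank_dom p q" using rankingD(1)[OF ranking] unfolding strict_rank_def by auto
  then have mL: "is_mindex p L" using st(5) by (auto simp: rank_dom_def is_mindex_def madd_def)
  have bz: "rank_below x z"
    unfolding rank_below_def
  proof (intro allI impI)
    fix j' K' assume "U j' K' \<in> deps z"
    then have "U j' K' \<in> (deps y - {U j K}) \<union> deps (tdiffK p L (PP a))"
      using deps_subst st(6) by blast
    then show "((j', K'), x) \<in> strict_rank R"
    proof
      assume "U j' K' \<in> deps y - {U j K}"
      then show ?thesis using step(4) unfolding rank_below_def by blast
    next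
      assume "U j' K' \<in> deps (tdiffK p L (PP a))"
      then have "((j', K'), (j, K)) \<in> strict_rank R" using deps_tdiffK_PP_below[OF st(3) mL] st(4,5) by simp
      then show ?thesis using jKx strict_rank_trans[OF ranking] by blast
    qed
  qed
  have "formal_solution z0 (U j K) = tdiffK p L (PP a) (formal_solution z0)"
    using IH[OF _ st(3) mL] jKx st(4,5) by simp
  then have "z (formal_solution z0) = y (formal_solution z0)" unfolding st(6) subst_coord_def by (metis fun_upd_triv)
  then show ?case using step(3)[OF bz] by simp
qed

text \<open>By passivity, the two sides reduce to the same element of \<open>B\<close>, and reduction does not
  change the value at the formal solution.\<close>

lemma formal_solution_solves:
  assumes "b < n" "is_mindex p M"
  shows "formal_solution z0 (U (ii b) (madd (JJ b) M)) = tdiffK p M (PP b) (formal_solution z0)"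
proof -
  have "\<forall>b M. (ii b, madd (JJ b) M) = x \<longrightarrow> b < n \<longrightarrow> is_mindex p M \<longrightarrow>
      formal_solution z0 (U (ii b) (madd (JJ b) M)) = tdiffK p M (PP b) (formal_solution z0)" for x
  proof (induction x rule: wf_induct_rule[OF wf_strict_rank[OF ranking]])
    case (1 x)
    show ?case
    proof (intro allI impI)
      fix b M assume h: "(ii b, madd (JJ b) M) = x" "b < n" "is_mindex p M"
      define j K where "j = ii b" and "K = madd (JJ b) M"
      have pr: "principal n ii JJ j K" using h unfolding principal_def j_def K_def by blast
      have xd: "(j, K) \<in> rank_dom p q"
        using system_index[OF h(2)] h(3) by (simp add: rank_dom_def j_def K_def is_mindex_madd)
      define a L where "a = fst (principal_choice j K)" and "L = snd (principal_choice j K)"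
      have mK: "is_mindex p K" using xd by (simp add: rank_dom_def)
      note s = principal_choiceD[OF pr mK, folded a_def L_def]
      have IH: "\<And>b' M'. ((ii b', madd (JJ b') M'), x) \<in> strict_rank R \<Longrightarrow> b' < n \<Longrightarrow> is_mindex p M' \<Longrightarrow>
          formal_solution z0 (U (ii b') (madd (JJ b') M')) = tdiffK p M' (PP b') (formal_solution z0)"
        using 1 by blast
      obtain G1 where G1: "(red_step p n ii JJ R PP)\<^sup>*\<^sup>* (tdiffK p L (PP a)) G1" "G1 \<in> B"
        using reduction_exists[OF B_poly_tdiffK[OF B_poly.base[OF PP_fB[OF s(1)]]]] by blast
      obtain G2 where G2: "(red_step p n ii JJ R PP)\<^sup>*\<^sup>* (tdiffK p M (PP b)) G2" "G2 \<in> B"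
        using reduction_exists[OF B_poly_tdiffK[OF B_poly.base[OF PP_fB[OF h(2)]]]] by blast
      have "G1 = G2"
        using passivity[OF s(1) h(2) s(4) h(3)] s G1 G2 unfolding j_def K_def reduces_to_def by simp
      have "formal_solution z0 (U j K) = tdiffK p L (PP a) (formal_solution z0)"
        using formal_solution_principal[OF pr xd] unfolding a_def L_def .
      also have "\<dots> = G1 (formal_solution z0)"
        using reduction_value_at_solution[OF G1(1) _ IH] rank_below_tdiffK_PP[OF s(1) s(4)] s h(1)
        unfolding j_def K_def by simp
      also have "\<dots> = G2 (formal_solution z0)" using \<open>G1 = G2\<close> by simp
      also have "\<dots> = tdiffK p M (PP b) (formal_solution z0)"
        using reduction_value_at_solution[OF G2(1) _ IH] rank_below_tdiffK_PP[OF h(2,3)] h(1) by simp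
      finally show "formal_solution z0 (U (ii b) (madd (JJ b) M)) = tdiffK p M (PP b) (formal_solution z0)"
        unfolding j_def K_def .
    qed
  qed
  then show ?thesis using assms by blast
qed

lemma tdiffK_Delta_at_solution: "a < n \<Longrightarrow> is_mindex p M \<Longrightarrow> tdiffK p M (\<Delta> a) (formal_solution z0) = 0"
  by (simp add: tdiffK_Delta formal_solution_solves)

lemma diff_ideal_at_solution: "G \<in> I \<Longrightarrow> G (formal_solution z0) = 0"
  by (induction rule: diff_ideal.induct) (auto simp: tdiffK_Delta_at_solution)

lemma fB_at_solution: "F \<in> B \<Longrightarrow> F (formal_solution z0) = F z0"
proof -
  assume F: "F \<in> B"
  show ?thesis
  proof (rule fA_deps_agree[of F p q "formal_solution z0" z0])
    show "F \<in> fA p q" using F by (rule fB_fA)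
    show "\<forall>c\<in>deps F. formal_solution z0 c = z0 c"
    proof
      fix c assume c: "c \<in> deps F"
      show "formal_solution z0 c = z0 c"
      proof (cases c)
        case (X k) then show ?thesis by (simp add: formal_solution_X)
      next
        case (U j K)
        then have "\<not> principal n ii JJ j K" using F c unfolding fB_def by force
        then show ?thesis using U formal_solution_parametric by simp
      qed
    qed
  qed
qed

lemma fB_congruent_unique:
  assumes "R1 \<in> B" "R2 \<in> B" "(\<lambda>z. Q z - R1 z) \<in> I" "(\<lambda>z. Q z - R2 z) \<in> I"
  shows "R1 = R2"
proof
  fix z0
  have "Q (formal_solution z0) - R1 (formal_solution z0) = 0" "Q (formal_solution z0) - R2 (formal_solution z0) = 0"
    using diff_ideal_at_solution[OF assms(3)] diff_ideal_at_solution[OF assms(4)] by auto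
  then show "R1 z0 = R2 z0" using fB_at_solution[OF assms(1)] fB_at_solution[OF assms(2)] by simp
qed

lemma reduced_form_eqI:
  assumes "F \<in> Bpoly" "G \<in> B" "(\<lambda>z. F z - G z) \<in> I"
  shows "reduced_form p q n ii JJ PP F = G"
  unfolding reduced_form_def
proof (rule the_equality)
  show "G \<in> B \<and> (\<lambda>z. F z - G z) \<in> I" using assms by blast
  fix G' assume "G' \<in> B \<and> (\<lambda>z. F z - G' z) \<in> I"
  then show "G' = G" using fB_congruent_unique[of G' G F] assms by blast
qed

lemma reduced_form_spec:
  assumes "F \<in> Bpoly"
  shows "reduced_form p q n ii JJ PP F \<in> B" "(\<lambda>z. F z - reduced_form p q n ii JJ PP F z) \<in> I"
proof -
  obtain G where G: "G \<in> B" "(\<lambda>z. F z - G z) \<in> I" using reduction_exists[OF assms] by blast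
  then have "reduced_form p q n ii JJ PP F = G" using reduced_form_eqI[OF assms] by blast
  then show "reduced_form p q n ii JJ PP F \<in> B" "(\<lambda>z. F z - reduced_form p q n ii JJ PP F z) \<in> I"
    using G by simp_all
qed

lemma frakD_frakD:
  assumes P: "P \<in> B"
  shows "frakD p q n ii JJ PP K (frakD p q n ii JJ PP L P) = frakD p q n ii JJ PP (madd K L) P"
proof -
  define A where "A = frakD p q n ii JJ PP L P"
  have DLC: "tdiffK p L P \<in> Bpoly" using P by (intro B_poly_tdiffK B_poly.base)
  have A: "A \<in> B" "(\<lambda>z. tdiffK p L P z - A z) \<in> I"
    using reduced_form_spec[OF DLC] unfolding A_def frakD_def by auto
  define Bq where "Bq = frakD p q n ii JJ PP K A"
  have DKC: "tdiffK p K A \<in> Bpoly" using A by (intro B_poly_tdiffK B_poly.base)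
  have Bq: "Bq \<in> B" "(\<lambda>z. tdiffK p K A z - Bq z) \<in> I"
    using reduced_form_spec[OF DKC] unfolding Bq_def frakD_def by auto
  have PS: "P \<in> fin_smooth" using P by (intro fA_fin_smooth fB_fA)
  have AS: "A \<in> fin_smooth" using A by (intro fA_fin_smooth fB_fA)
  have DLS: "tdiffK p L P \<in> fin_smooth" using PS by (rule fin_smooth_tdiffK)
  have e1: "tdiffK p (madd K L) P = tdiffK p K (tdiffK p L P)" using tdiffK_madd[OF PS] by simp
  have "tdiffK p K (\<lambda>z. tdiffK p L P z - A z) \<in> I" using A(2) by (rule diff_ideal_tdiffK)
  then have i1: "(\<lambda>z. tdiffK p K (tdiffK p L P) z - tdiffK p K A z) \<in> I"
    using tdiffK_minus[OF DLS AS] by simp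
  have "(\<lambda>z. (\<lambda>z. tdiffK p K (tdiffK p L P) z - tdiffK p K A z) z + (\<lambda>z. tdiffK p K A z - Bq z) z) \<in> I"
    using i1 Bq(2) by (rule diff_ideal_add[rotated])
  then have "(\<lambda>z. tdiffK p (madd K L) P z - Bq z) \<in> I" unfolding e1 by simp
  moreover have "tdiffK p (madd K L) P \<in> Bpoly" using P by (intro B_poly_tdiffK B_poly.base)
  ultimately have "reduced_form p q n ii JJ PP (tdiffK p (madd K L) P) = Bq"
    using reduced_form_eqI Bq(1) by blast
  then show ?thesis unfolding Bq_def A_def frakD_def[of p q n ii JJ PP "madd K L"] by simp
qed

end

theorem proposition1:
  fixes p q n :: nat and ii :: "nat \<Rightarrow> nat" and JJ :: "nat \<Rightarrow> mindex"
    and R :: "((nat \<times> mindex) \<times> (nat \<times> mindex)) set" and PP :: "nat \<Rightarrow> jfun"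
    and K L :: mindex and P :: jfun
  assumes "passive_orthonomic p q n ii JJ R PP"
    and "is_mindex p K" and "is_mindex p L"
    and "P \<in> fB p q n ii JJ"
  shows "frakD p q n ii JJ PP K (frakD p q n ii JJ PP L P) = frakD p q n ii JJ PP (madd K L) P"
proof -
  interpret passive_system p q n ii JJ R PP by (rule passive_system.intro[OF assms(1)])
  show ?thesis using frakD_frakD[OF assms(4)] .
qed

end
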